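(* Let $I,J\subseteq S$ be spherical, let $P_I=B_+W_IB_+$ and $P_J=B_-W_JB_-$, and let $w\in W$. Then $[P_I\cap wP_Jw^{-1} : B_+\cap wB_-w^{-1}]<\infty$, and consequently $P_I\cap wP_Jw^{-1}$ is a finite group.
   Context: Standing setup: $(W,S)$ is a Coxeter system with finite $S=\{s_1,\dots,s_n\}$, word length $\ell$, and $m(s,t)$ the order of $st$; for $J\subseteq S$, $W_J=\langle J\rangle$, and $J$ is spherical if $W_J$ is finite. $(\Delta_+,\Delta_-,\delta^* )$ is a thick twin building of type $(W,S)$ with chamber sets $\mathcal{C}_\pm$, Weyl distances $\delta_\pm$ and codistance $\delta^*$. There are integers $q_i\ge2$ such that every $s_i$-panel contains exactly $q_i+1$ chambers; $q_{\min}=\min q_i$, $q_{\max}=\max q_i$. A group $G$ acts strongly transitively on the twin building, i.e. by automorphisms preserving $\delta_+,\delta_-,\delta^*$ and transitively on pairs $(\Sigma,C)$ with $\Sigma$ a twin apartment and $C$ a chamber of $\Sigma$. Fix opposite chambers $C_+\in\mathcal{C}_+$, $C_-\in\mathcal{C}_-$; let $\Sigma$ be the twin apartment containing them, $B_\pm=G_{C_\pm}$, $N=G_\Sigma$, $T=B_+\cap B_-$, which is assumed finite. Then $(B_+,B_-,N)$ is a twin BN-pair and $N/T\cong W$. For $w\in W$ choose $n\in N$ mapping to $w$ and write $wC_-=nC_-$ (so $\delta^*(C_+,wC_-)=w$) and $wHw^{-1}=nHn^{-1}$ for subgroups $H\supseteq T$ (independent of the choice of $n$); in particular $wB_-w^{-1}=G_{wC_-}$.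 For $J\subseteq S$, $B_\pm W_JB_\pm$ denotes the union of the double cosets $B_\pm nB_\pm$ with $n\in N$ mapping into $W_J$ (the stabilizer of the $J$-residue of $C_\pm$). *)

theory Defs
  imports "HOL-Algebra.Algebra"
begin

definition word_prod :: "('w, 'a) monoid_scheme \<Rightarrow> 'w list \<Rightarrow> 'w" where
  "word_prod W ws = foldr (\<lambda>s acc. s \<otimes>\<^bsub>W\<^esub> acc) ws \<one>\<^bsub>W\<^esub>"

definition cox_len :: "('w, 'a) monoid_scheme \<Rightarrow> 'w set \<Rightarrow> 'w \<Rightarrow> nat" where
  "cox_len W S w = (LEAST k. \<exists>ws. set ws \<subseteq> S \<and> length ws = k \<and> word_prod W ws = w)"

definition alt_word :: "'w \<Rightarrow> 'w \<Rightarrow> nat \<Rightarrow> 'w list" where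
  "alt_word s t m = concat (replicate m [s, t])"

text \<open>The monoid congruence on words over S generated by the Coxeter relations
  s s = 1 and (s t)^{m(s,t)} = 1, where m(s,t) is the order of s t in W
  (no relation when the order is infinite).\<close>
inductive_set cox_rel :: "('w, 'a) monoid_scheme \<Rightarrow> 'w set \<Rightarrow> ('w list \<times> 'w list) set"
  for W :: "('w, 'a) monoid_scheme" and S :: "'w set" where
  refl: "set u \<subseteq> S \<Longrightarrow> (u, u) \<in> cox_rel W S"
| sym: "(u, v) \<in> cox_rel W S \<Longrightarrow> (v, u) \<in> cox_rel W S"
| trans: "(u, v) \<in> cox_rel W S \<Longrightarrow> (v, x) \<in> cox_rel W S \<Longrightarrow> (u, x) \<in> cox_rel W S"
| ctxt: "(u, v) \<in> cox_rel W S \<Longrightarrow> set a \<subseteq> S \<Longrightarrow> set b \<subseteq> S \<Longrightarrow> (a @ u @ b, a @ v @ b) \<in> cox_rel W S"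
| invol: "s \<in> S \<Longrightarrow> ([s, s], []) \<in> cox_rel W S"
| braid: "s \<in> S \<Longrightarrow> t \<in> S \<Longrightarrow> group.ord W (s \<otimes>\<^bsub>W\<^esub> t) = m \<Longrightarrow> m > 0 \<Longrightarrow>
           (alt_word s t m, []) \<in> cox_rel W S"

text \<open>(W,S) is a Coxeter system with finite S: W is generated by the involutions in S and
  is presented by the relations (st)^{m(s,t)} = 1 (two words over S have the same product iff
  they are congruent modulo the relations).\<close>
definition coxeter_system :: "('w, 'a) monoid_scheme \<Rightarrow> 'w set \<Rightarrow> bool" where
  "coxeter_system W S \<longleftrightarrow> group W \<and> finite S \<and> S \<subseteq> carrier W \<and> \<one>\<^bsub>W\<^esub> \<notin> S \<and>
     (\<forall>s\<in>S. s \<otimes>\<^bsub>W\<^esub> s = \<one>\<^bsub>W\<^esub>) \<and> generate W S = carrier W \<and>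
     (\<forall>u v. set u \<subseteq> S \<longrightarrow> set v \<subseteq> S \<longrightarrow> word_prod W u = word_prod W v \<longrightarrow> (u, v) \<in> cox_rel W S)"

definition building :: "('w, 'a) monoid_scheme \<Rightarrow> 'w set \<Rightarrow> 'c set \<Rightarrow> ('c \<Rightarrow> 'c \<Rightarrow> 'w) \<Rightarrow> bool" where
  "building W S C \<delta> \<longleftrightarrow>
     (\<forall>x\<in>C. \<forall>y\<in>C. \<delta> x y \<in> carrier W) \<and>
     (\<forall>x\<in>C. \<forall>y\<in>C. \<delta> x y = \<one>\<^bsub>W\<^esub> \<longleftrightarrow> x = y) \<and>
     (\<forall>x\<in>C. \<forall>y\<in>C. \<forall>x'\<in>C. \<forall>s\<in>S. \<delta> x' x = s \<longrightarrow>
        (\<delta> x' y = s \<otimes>\<^bsub>W\<^esub> \<delta> x y \<or> \<delta> x' y = \<delta> x y) \<and>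
        (cox_len W S (s \<otimes>\<^bsub>W\<^esub> \<delta> x y) = cox_len W S (\<delta> x y) + 1 \<longrightarrow> \<delta> x' y = s \<otimes>\<^bsub>W\<^esub> \<delta> x y)) \<and>
     (\<forall>x\<in>C. \<forall>y\<in>C. \<forall>s\<in>S. \<exists>x'\<in>C. \<delta> x' x = s \<and> \<delta> x' y = s \<otimes>\<^bsub>W\<^esub> \<delta> x y)"

definition twin_half :: "('w, 'a) monoid_scheme \<Rightarrow> 'w set \<Rightarrow> 'c set \<Rightarrow> ('c \<Rightarrow> 'c \<Rightarrow> 'w) \<Rightarrow> 'c set \<Rightarrow>
    ('c \<Rightarrow> 'c \<Rightarrow> 'w) \<Rightarrow> bool" where
  "twin_half W S C \<delta> D \<delta>s \<longleftrightarrow>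
     (\<forall>x\<in>C. \<forall>y\<in>D. \<forall>x'\<in>C. \<forall>s\<in>S. \<delta> x' x = s \<longrightarrow>
        cox_len W S (s \<otimes>\<^bsub>W\<^esub> \<delta>s x y) + 1 = cox_len W S (\<delta>s x y) \<longrightarrow> \<delta>s x' y = s \<otimes>\<^bsub>W\<^esub> \<delta>s x y) \<and>
     (\<forall>x\<in>C. \<forall>y\<in>D. \<forall>s\<in>S. \<exists>x'\<in>C. \<delta> x' x = s \<and> \<delta>s x' y = s \<otimes>\<^bsub>W\<^esub> \<delta>s x y)"

definition twin_building :: "('w, 'a) monoid_scheme \<Rightarrow> 'w set \<Rightarrow> 'c set \<Rightarrow> ('c \<Rightarrow> 'c \<Rightarrow> 'w) \<Rightarrow>
    'c set \<Rightarrow> ('c \<Rightarrow> 'c \<Rightarrow> 'w) \<Rightarrow> ('c \<Rightarrow> 'c \<Rightarrow> 'w) \<Rightarrow> bool" where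
  "twin_building W S Cp \<delta>p Cm \<delta>m \<delta>s \<longleftrightarrow>
     coxeter_system W S \<and> Cp \<inter> Cm = {} \<and> building W S Cp \<delta>p \<and> building W S Cm \<delta>m \<and>
     (\<forall>x\<in>Cp. \<forall>y\<in>Cm. \<delta>s x y \<in> carrier W \<and> \<delta>s y x = inv\<^bsub>W\<^esub> (\<delta>s x y)) \<and>
     twin_half W S Cp \<delta>p Cm \<delta>s \<and> twin_half W S Cm \<delta>m Cp \<delta>s"

definition panel :: "('w, 'a) monoid_scheme \<Rightarrow> 'c set \<Rightarrow> ('c \<Rightarrow> 'c \<Rightarrow> 'w) \<Rightarrow> 'w \<Rightarrow> 'c \<Rightarrow> 'c set" where
  "panel W C \<delta> s x = {y \<in> C. \<delta> x y = \<one>\<^bsub>W\<^esub> \<or> \<delta> x y = s}"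

definition panel_sizes :: "('w, 'a) monoid_scheme \<Rightarrow> 'w set \<Rightarrow> 'c set \<Rightarrow> ('c \<Rightarrow> 'c \<Rightarrow> 'w) \<Rightarrow>
    'c set \<Rightarrow> ('c \<Rightarrow> 'c \<Rightarrow> 'w) \<Rightarrow> ('w \<Rightarrow> nat) \<Rightarrow> bool" where
  "panel_sizes W S Cp \<delta>p Cm \<delta>m q \<longleftrightarrow>
     (\<forall>s\<in>S. q s \<ge> 2 \<and> (\<forall>x\<in>Cp. card (panel W Cp \<delta>p s x) = q s + 1) \<and>
                       (\<forall>x\<in>Cm. card (panel W Cm \<delta>m s x) = q s + 1))"

text \<open>Twin apartments: images of isometries of the standard thin twin building of type (W,S),
  i.e. W x {+,-} with \<delta>(u,v) = u^{-1} v in each half and \<delta>*(u,v) = u^{-1} v.\<close>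
definition twin_apartment :: "('w, 'a) monoid_scheme \<Rightarrow> 'c set \<Rightarrow> ('c \<Rightarrow> 'c \<Rightarrow> 'w) \<Rightarrow>
    'c set \<Rightarrow> ('c \<Rightarrow> 'c \<Rightarrow> 'w) \<Rightarrow> ('c \<Rightarrow> 'c \<Rightarrow> 'w) \<Rightarrow> 'c set \<Rightarrow> bool" where
  "twin_apartment W Cp \<delta>p Cm \<delta>m \<delta>s \<Sigma> \<longleftrightarrow>
     (\<exists>f g. (\<forall>u\<in>carrier W. f u \<in> Cp \<and> g u \<in> Cm) \<and>
       (\<forall>u\<in>carrier W. \<forall>v\<in>carrier W.
          \<delta>p (f u) (f v) = inv\<^bsub>W\<^esub> u \<otimes>\<^bsub>W\<^esub> v \<and> \<delta>m (g u) (g v) = inv\<^bsub>W\<^esub> u \<otimes>\<^bsub>W\<^esub> v \<and>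
          \<delta>s (f u) (g v) = inv\<^bsub>W\<^esub> u \<otimes>\<^bsub>W\<^esub> v \<and> \<delta>s (g u) (f v) = inv\<^bsub>W\<^esub> u \<otimes>\<^bsub>W\<^esub> v) \<and>
       \<Sigma> = f ` carrier W \<union> g ` carrier W)"

definition strongly_transitive_action :: "('g, 'b) monoid_scheme \<Rightarrow> ('g \<Rightarrow> 'c \<Rightarrow> 'c) \<Rightarrow>
    ('w, 'a) monoid_scheme \<Rightarrow> 'c set \<Rightarrow> ('c \<Rightarrow> 'c \<Rightarrow> 'w) \<Rightarrow> 'c set \<Rightarrow> ('c \<Rightarrow> 'c \<Rightarrow> 'w) \<Rightarrow>
    ('c \<Rightarrow> 'c \<Rightarrow> 'w) \<Rightarrow> bool" where
  "strongly_transitive_action G act W Cp \<delta>p Cm \<delta>m \<delta>s \<longleftrightarrow>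
     group G \<and>
     (\<forall>g\<in>carrier G. (\<forall>x\<in>Cp. act g x \<in> Cp) \<and> (\<forall>x\<in>Cm. act g x \<in> Cm)) \<and>
     (\<forall>x\<in>Cp \<union> Cm. act \<one>\<^bsub>G\<^esub> x = x) \<and>
     (\<forall>g\<in>carrier G. \<forall>h\<in>carrier G. \<forall>x\<in>Cp \<union> Cm. act (g \<otimes>\<^bsub>G\<^esub> h) x = act g (act h x)) \<and>
     (\<forall>g\<in>carrier G.
        (\<forall>x\<in>Cp. \<forall>y\<in>Cp. \<delta>p (act g x) (act g y) = \<delta>p x y) \<and>
        (\<forall>x\<in>Cm. \<forall>y\<in>Cm. \<delta>m (act g x) (act g y) = \<delta>m x y) \<and>
        (\<forall>x\<in>Cp. \<forall>y\<in>Cm. \<delta>s (act g x) (act g y) = \<delta>s x y \<and> \<delta>s (act g y) (act g x) = \<delta>s y x)) \<and>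
     (\<forall>\<Sigma> \<Sigma>' x x'. twin_apartment W Cp \<delta>p Cm \<delta>m \<delta>s \<Sigma> \<longrightarrow> twin_apartment W Cp \<delta>p Cm \<delta>m \<delta>s \<Sigma>' \<longrightarrow>
        x \<in> \<Sigma> \<longrightarrow> x' \<in> \<Sigma>' \<longrightarrow> (x \<in> Cp \<and> x' \<in> Cp \<or> x \<in> Cm \<and> x' \<in> Cm) \<longrightarrow>
        (\<exists>g\<in>carrier G. act g ` \<Sigma> = \<Sigma>' \<and> act g x = x'))"

definition chamber_stab :: "('g, 'b) monoid_scheme \<Rightarrow> ('g \<Rightarrow> 'c \<Rightarrow> 'c) \<Rightarrow> 'c \<Rightarrow> 'g set" where
  "chamber_stab G act x = {g \<in> carrier G. act g x = x}"

definition set_stab :: "('g, 'b) monoid_scheme \<Rightarrow> ('g \<Rightarrow> 'c \<Rightarrow> 'c) \<Rightarrow> 'c set \<Rightarrow> 'g set" where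
  "set_stab G act \<Sigma> = {g \<in> carrier G. act g ` \<Sigma> = \<Sigma>}"

text \<open>B W_Y B: union of the double cosets B n B over n in N whose image in W
  (namely \<delta>*(C_+, n C_-)) lies in the subgroup Y.\<close>
definition double_coset_union :: "('g, 'b) monoid_scheme \<Rightarrow> ('g \<Rightarrow> 'c \<Rightarrow> 'c) \<Rightarrow>
    ('c \<Rightarrow> 'c \<Rightarrow> 'w) \<Rightarrow> 'c \<Rightarrow> 'c \<Rightarrow> 'g set \<Rightarrow> 'g set \<Rightarrow> 'w set \<Rightarrow> 'g set" where
  "double_coset_union G act \<delta>s cp cm B N Y =
     (\<Union>n' \<in> {n'. n' \<in> N \<and> \<delta>s cp (act n' cm) \<in> Y}. set_mult G B (l_coset G n' B))"

definition conjset :: "('g, 'b) monoid_scheme \<Rightarrow> 'g \<Rightarrow> 'g set \<Rightarrow> 'g set" where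
  "conjset G n H = r_coset G (l_coset G n H) (inv\<^bsub>G\<^esub> n)"

end

theory Submission
  imports Defs
begin

text \<open>
  \<open>P\<^sub>I\<close> is the stabiliser of the \<open>I\<close>-residue of \<open>C\<^sub>+\<close>, i.e. the set of \<open>g\<close> with
  \<open>\<delta>(C\<^sub>+, g C\<^sub>+) \<in> W\<^sub>I\<close>. The nontrivial inclusion is the Bruhat decomposition
  \<open>G = B\<^sub>+ N B\<^sub>+\<close> on chambers, which strong transitivity reduces to the fact that every chamber
  shares a twin apartment with \<open>C\<^sub>+\<close>; such an apartment is spanned by the chamber together with
  a suitable chamber opposite to it. Likewise \<open>w P\<^sub>J w\<^sup>-\<^sup>1\<close> is the stabiliser of the
  \<open>J\<close>-residue of \<open>w C\<^sub>-\<close>, so the intersection \<open>H\<close> is a group.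
  Spherical residues are finite because panels are finite. Hence every \<open>h \<in> H\<close> moves \<open>C\<^sub>+\<close>
  into a finite set, and \<open>C\<^sub>-\<close> into the finite set of chambers at distance
  \<open>\<delta>(w C\<^sub>-, C\<^sub>-)\<close> from the \<open>J\<close>-residue of \<open>w C\<^sub>-\<close>. So \<open>H\<close> is a finite union of cosets of
  the finite group \<open>T = B\<^sub>+ \<inter> B\<^sub>-\<close>, and in particular finite.
\<close>

section \<open>Coxeter groups\<close>

locale coxeter_group = group +
  fixes S
  assumes coxeter: "coxeter_system G S"
begin

lemma gens_subset: "S \<subseteq> carrier G"
  and gen_square: "s \<in> S \<Longrightarrow> s \<otimes> s = \<one>"
  and one_notin_gens: "\<one> \<notin> S"
  and generate_gens: "generate G S = carrier G"
  and equal_word_prod_congruent: "set u \<subseteq> S \<Longrightarrow> set v \<subseteq> S \<Longrightarrow>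
    word_prod G u = word_prod G v \<Longrightarrow> (u, v) \<in> cox_rel G S"
  using coxeter unfolding coxeter_system_def by blast+

lemma gen_closed [intro]: "s \<in> S \<Longrightarrow> s \<in> carrier G"
  using gens_subset by auto

lemma inv_gen [simp]: "s \<in> S \<Longrightarrow> inv s = s"
  by (metis gen_closed gen_square inv_char)

lemma mult_gen_gen [simp]: "a \<in> carrier G \<Longrightarrow> s \<in> S \<Longrightarrow> a \<otimes> s \<otimes> s = a"
  by (simp add: m_assoc gen_square gen_closed)

lemma gen_gen_mult [simp]: "a \<in> carrier G \<Longrightarrow> s \<in> S \<Longrightarrow> s \<otimes> (s \<otimes> a) = a"
  by (simp add: m_assoc[symmetric] gen_square gen_closed)

lemma inv_mult_gen: "a \<in> carrier G \<Longrightarrow> s \<in> S \<Longrightarrow> inv (a \<otimes> s) = s \<otimes> inv a"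
  by (simp add: inv_mult_group gen_closed)

lemma inv_gen_mult: "a \<in> carrier G \<Longrightarrow> s \<in> S \<Longrightarrow> inv (s \<otimes> a) = inv a \<otimes> s"
  by (simp add: inv_mult_group gen_closed)

lemma gen_mult_neq: "a \<in> carrier G \<Longrightarrow> s \<in> S \<Longrightarrow> s \<otimes> a \<noteq> a"
  using one_notin_gens by (metis gen_closed r_cancel_one' l_one)

lemma word_prod_Nil [simp]: "word_prod G [] = \<one>"
  by (simp add: word_prod_def)

lemma word_prod_Cons [simp]: "word_prod G (s # ws) = s \<otimes> word_prod G ws"
  by (simp add: word_prod_def)

lemma word_prod_closed: "set ws \<subseteq> S \<Longrightarrow> word_prod G ws \<in> carrier G"
  by (induction ws) auto

lemma word_prod_append: "set xs \<subseteq> S \<Longrightarrow> set ys \<subseteq> S \<Longrightarrow>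
    word_prod G (xs @ ys) = word_prod G xs \<otimes> word_prod G ys"
  by (induction xs) (auto simp: m_assoc word_prod_closed gen_closed)

lemma inv_word_prod: "set ws \<subseteq> S \<Longrightarrow> inv (word_prod G ws) = word_prod G (rev ws)"
proof (induction ws)
  case (Cons s ws)
  then have "inv (word_prod G (s # ws)) = word_prod G (rev ws) \<otimes> word_prod G [s]"
    by (simp add: inv_mult_group word_prod_closed gen_closed)
  with Cons.prems show ?case by (simp add: word_prod_append)
qed simp

lemma word_of_generate:
  assumes "h \<in> generate G Xs" "Xs \<subseteq> S"
  shows "\<exists>ws. set ws \<subseteq> Xs \<and> word_prod G ws = h"
  using assms
proof (induction rule: generate.induct)
  case one
  show ?case by (intro exI[of _ "[]"]) simp
next
  case (incl h)
  then show ?case using gen_closed[of h] by (intro exI[of _ "[h]"]) auto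
next
  case (inv h)
  then show ?case using gen_closed[of h] by (intro exI[of _ "[h]"]) auto
next
  case (eng h1 h2)
  then obtain w1 w2 where "set w1 \<subseteq> Xs" "word_prod G w1 = h1" "set w2 \<subseteq> Xs" "word_prod G w2 = h2"
    by blast
  with eng.prems show ?case by (intro exI[of _ "w1 @ w2"]) (auto simp: word_prod_append)
qed

abbreviation len where "len \<equiv> cox_len G S"

lemma len_witness:
  assumes "w \<in> carrier G"
  shows "\<exists>ws. set ws \<subseteq> S \<and> length ws = len w \<and> word_prod G ws = w"
proof -
  obtain ws where "set ws \<subseteq> S" "word_prod G ws = w"
    using word_of_generate[of w S] generate_gens assms by auto
  then have "\<exists>k ws. set ws \<subseteq> S \<and> length ws = k \<and> word_prod G ws = w" by blast
  then show ?thesis unfolding cox_len_def by (rule LeastI_ex)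
qed

lemma len_word_prod_le: "set ws \<subseteq> S \<Longrightarrow> len (word_prod G ws) \<le> length ws"
  unfolding cox_len_def by (rule Least_le) blast

lemma len_one [simp]: "len \<one> = 0"
  using len_word_prod_le[of "[]"] by simp

lemma len_eq_0_iff: "w \<in> carrier G \<Longrightarrow> len w = 0 \<longleftrightarrow> w = \<one>"
  using len_witness by fastforce

lemma len_inv_le: "x \<in> carrier G \<Longrightarrow> len (inv x) \<le> len x"
  by (metis inv_word_prod len_witness len_word_prod_le length_rev set_rev)

lemma len_inv [simp]: "w \<in> carrier G \<Longrightarrow> len (inv w) = len w"
  by (metis inv_closed inv_inv le_antisym len_inv_le)

lemma len_mult_le:
  assumes "a \<in> carrier G" "b \<in> carrier G"
  shows "len (a \<otimes> b) \<le> len a + len b"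
proof -
  obtain u v where "set u \<subseteq> S" "length u = len a" "word_prod G u = a"
    and "set v \<subseteq> S" "length v = len b" "word_prod G v = b"
    using len_witness assms by meson
  then show ?thesis using len_word_prod_le[of "u @ v"] by (simp add: word_prod_append)
qed

lemma len_gen [simp]:
  assumes "s \<in> S"
  shows "len s = 1"
proof -
  have "len s \<le> 1" using len_word_prod_le[of "[s]"] assms gen_closed by auto
  moreover have "len s \<noteq> 0" using len_eq_0_iff[of s] one_notin_gens assms by auto
  ultimately show ?thesis by simp
qed

text \<open>The defining relations preserve the parity of word length, so multiplying by a generator
  changes the length by exactly one.\<close>

lemma cox_rel_length_parity: "(u, v) \<in> cox_rel G S \<Longrightarrow> even (length u) = even (length v)"
  by (induction rule: cox_rel.induct) (auto simp: alt_word_def length_concat sum_list_replicate)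

lemma len_gen_mult:
  assumes s: "s \<in> S" and w: "w \<in> carrier G"
  shows "len (s \<otimes> w) = len w + 1 \<or> len w = len (s \<otimes> w) + 1"
proof -
  have sw: "s \<otimes> w \<in> carrier G" using s w by auto
  have up: "len (s \<otimes> w) \<le> len w + 1" using len_mult_le[of s w] s w by auto
  have down: "len w \<le> len (s \<otimes> w) + 1" using len_mult_le[of s "s \<otimes> w"] s sw w by auto
  obtain u where u: "set u \<subseteq> S" "length u = len w" "word_prod G u = w" using len_witness w by blast
  obtain v where v: "set v \<subseteq> S" "length v = len (s \<otimes> w)" "word_prod G v = s \<otimes> w"
    using len_witness sw by blast
  have "(u, s # v) \<in> cox_rel G S"
    using equal_word_prod_congruent[of u "s # v"] u v s w by simp
  then have "even (len w) = even (len (s \<otimes> w) + 1)"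
    using cox_rel_length_parity u v by fastforce
  with up down show ?thesis by presburger
qed

lemma len_mult_gen:
  assumes s: "s \<in> S" and w: "w \<in> carrier G"
  shows "len (w \<otimes> s) = len w + 1 \<or> len w = len (w \<otimes> s) + 1"
proof -
  have "inv (w \<otimes> s) = s \<otimes> inv w" using inv_mult_gen s w by simp
  then show ?thesis using len_gen_mult[of s "inv w"] len_inv[of w] len_inv[of "w \<otimes> s"] s w gen_closed
    by auto
qed

lemma left_descent_exists:
  assumes w: "w \<in> carrier G" "w \<noteq> \<one>"
  shows "\<exists>s\<in>S. len (s \<otimes> w) + 1 = len w"
proof -
  obtain u where u: "set u \<subseteq> S" "length u = len w" "word_prod G u = w" using len_witness w by blast
  then obtain s u' where su: "u = s # u'" using w by (cases u) auto
  with u have "s \<otimes> w = word_prod G u'"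
    using gen_gen_mult[of "word_prod G u'" s] word_prod_closed by auto
  then have "len (s \<otimes> w) < len w"
    using len_word_prod_le[of u'] u su by fastforce
  then show ?thesis using len_gen_mult[of s w] u su w by force
qed

lemma right_descent_exists:
  assumes w: "w \<in> carrier G" "w \<noteq> \<one>"
  shows "\<exists>s\<in>S. len (w \<otimes> s) + 1 = len w"
proof -
  obtain s where s: "s \<in> S" "len (s \<otimes> inv w) + 1 = len (inv w)"
    using left_descent_exists[of "inv w"] w by (metis inv_closed inv_eq_1_iff)
  then show ?thesis using inv_mult_gen[of w s] len_inv[of "w \<otimes> s"] w by (metis gen_closed len_inv m_closed)
qed

definition reduced :: "'a list \<Rightarrow> bool" where
  "reduced ws \<longleftrightarrow> set ws \<subseteq> S \<and> len (word_prod G ws) = length ws"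

lemma reduced_appendD:
  assumes "reduced (a @ b)"
  shows "reduced a" "reduced b"
proof -
  have sa: "set a \<subseteq> S" and sb: "set b \<subseteq> S" using assms unfolding reduced_def by auto
  have "len (word_prod G (a @ b)) \<le> len (word_prod G a) + len (word_prod G b)"
    using word_prod_append[OF sa sb] len_mult_le[OF word_prod_closed[OF sa] word_prod_closed[OF sb]]
    by simp
  moreover have "len (word_prod G a) \<le> length a" "len (word_prod G b) \<le> length b"
    using len_word_prod_le sa sb by auto
  ultimately show "reduced a" "reduced b" using assms sa sb unfolding reduced_def by auto
qed

lemma reduced_rev: "reduced ws \<Longrightarrow> reduced (rev ws)"
  unfolding reduced_def by (metis inv_word_prod len_inv length_rev set_rev word_prod_closed)

lemma reduced_word_exists: "w \<in> carrier G \<Longrightarrow> \<exists>ws. reduced ws \<and> word_prod G ws = w"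
  using len_witness unfolding reduced_def by metis

text \<open>The half-space \<open>{y. len (s \<otimes> y) > len y}\<close> (a root of the Coxeter complex) is connected
  by right multiplications with generators staying inside it: this is because a reduced word
  for an element of the half-space has all its prefixes in the half-space.\<close>

lemma positive_half_connected:
  assumes s: "s \<in> S"
    and step: "\<And>y r. y \<in> carrier G \<Longrightarrow> r \<in> S \<Longrightarrow> len (s \<otimes> y) = len y + 1 \<Longrightarrow>
        len (s \<otimes> (y \<otimes> r)) = len (y \<otimes> r) + 1 \<Longrightarrow> R y = R (y \<otimes> r)"
    and y: "y \<in> carrier G" "len (s \<otimes> y) = len y + 1"
  shows "R \<one> = R y"
proof -
  have "reduced ws \<Longrightarrow> len (s \<otimes> word_prod G ws) = len (word_prod G ws) + 1 \<Longrightarrow>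
      R \<one> = R (word_prod G ws)" for ws
  proof (induction ws rule: rev_induct)
    case (snoc r ws)
    define p where "p = word_prod G ws"
    have ws: "reduced ws" and r: "r \<in> S"
      using reduced_appendD[OF snoc.prems(1)] by (auto simp: reduced_def)
    have p: "p \<in> carrier G" using ws word_prod_closed p_def by (simp add: reduced_def)
    have pr: "word_prod G (ws @ [r]) = p \<otimes> r"
      using word_prod_append[of ws "[r]"] ws r p_def by (auto simp: reduced_def gen_closed)
    have len_pr: "len (p \<otimes> r) = len p + 1"
      using snoc.prems(1) ws pr p_def by (simp add: reduced_def)
    have "len (s \<otimes> p) = len p + 1"
    proof (rule ccontr)
      assume "\<not> ?thesis"
      then have "len (s \<otimes> p) + 1 = len p" using len_gen_mult[OF s p] by auto
      moreover have "len (s \<otimes> p \<otimes> r) \<le> len (s \<otimes> p) + 1" using len_mult_le[of "s \<otimes> p" r] s p r by auto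
      ultimately show False using snoc.prems(2) pr len_pr s p r by (simp add: m_assoc gen_closed)
    qed
    then show ?case using snoc.IH ws p_def step[OF p r] snoc.prems(2) pr by simp
  qed simp
  moreover obtain ws where "reduced ws" "word_prod G ws = y" using reduced_word_exists y by blast
  ultimately show ?thesis using y by blast
qed

end

section \<open>Buildings as W-metric spaces\<close>

locale w_building = coxeter_group +
  fixes C :: "'c set" and \<delta> :: "'c \<Rightarrow> 'c \<Rightarrow> 'a"
  assumes building: "building G S C \<delta>"
begin

lemma dist_closed: "x \<in> C \<Longrightarrow> y \<in> C \<Longrightarrow> \<delta> x y \<in> carrier G"
  and dist_eq_one_iff: "x \<in> C \<Longrightarrow> y \<in> C \<Longrightarrow> \<delta> x y = \<one> \<longleftrightarrow> x = y"
  and dist_adjacent_cases: "x \<in> C \<Longrightarrow> y \<in> C \<Longrightarrow> x' \<in> C \<Longrightarrow> s \<in> S \<Longrightarrow> \<delta> x' x = s \<Longrightarrow>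
      \<delta> x' y = s \<otimes> \<delta> x y \<or> \<delta> x' y = \<delta> x y"
  and dist_adjacent_up: "x \<in> C \<Longrightarrow> y \<in> C \<Longrightarrow> x' \<in> C \<Longrightarrow> s \<in> S \<Longrightarrow> \<delta> x' x = s \<Longrightarrow>
      len (s \<otimes> \<delta> x y) = len (\<delta> x y) + 1 \<Longrightarrow> \<delta> x' y = s \<otimes> \<delta> x y"
  and adjacent_chamber_exists: "x \<in> C \<Longrightarrow> y \<in> C \<Longrightarrow> s \<in> S \<Longrightarrow>
      \<exists>x'\<in>C. \<delta> x' x = s \<and> \<delta> x' y = s \<otimes> \<delta> x y"
  using building unfolding building_def by blast+

lemma dist_self [simp]: "x \<in> C \<Longrightarrow> \<delta> x x = \<one>"
  using dist_eq_one_iff by blast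

lemma dist_gen_sym:
  assumes "x \<in> C" "x' \<in> C" "s \<in> S" "\<delta> x' x = s"
  shows "\<delta> x x' = s"
proof -
  have "x \<noteq> x'" using assms one_notin_gens by auto
  then have "\<delta> x x' \<noteq> \<one>" using dist_eq_one_iff assms by blast
  moreover have "\<one> = s \<otimes> \<delta> x x' \<or> \<one> = \<delta> x x'"
    using dist_adjacent_cases[of x x' x' s] assms by simp
  ultimately have "s \<otimes> \<delta> x x' = \<one>" by metis
  then show ?thesis using gen_gen_mult[of "\<delta> x x'" s] assms dist_closed gen_closed by simp
qed

lemma panel_dist:
  assumes "x \<in> C" "x' \<in> C" "x1 \<in> C" "s \<in> S" "\<delta> x' x = s" "\<delta> x1 x = s" "x' \<noteq> x1"
  shows "\<delta> x' x1 = s"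
proof -
  have "\<delta> x x1 = s" using dist_gen_sym assms by blast
  moreover have "\<delta> x' x1 \<noteq> \<one>" using dist_eq_one_iff assms by blast
  moreover have "s \<otimes> \<delta> x x1 = \<one>" using calculation(1) gen_square assms(4) by simp
  ultimately show ?thesis using dist_adjacent_cases[OF assms(1,3,2,4,5)] by auto
qed

text \<open>Walking along a reduced word from \<open>y\<close> to \<open>x0\<close>: the prefix \<open>pre\<close> has already been
  walked (ending at \<open>xi\<close>), the suffix \<open>rest\<close> is still to go.\<close>

lemma dist_along_reduced_word:
  "reduced (pre @ rest) \<Longrightarrow> xi \<in> C \<Longrightarrow> y \<in> C \<Longrightarrow> x0 \<in> C \<Longrightarrow>
   \<delta> xi y = word_prod G rest \<Longrightarrow> \<delta> xi x0 = word_prod G (rev pre) \<Longrightarrow>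
   \<delta> y x0 = word_prod G (rev (pre @ rest))"
proof (induction rest arbitrary: pre xi)
  case Nil
  then show ?case using dist_eq_one_iff by simp
next
  case (Cons s rest)
  have s: "s \<in> S" and rest: "set rest \<subseteq> S" and pre: "set pre \<subseteq> S"
    using Cons.prems(1) unfolding reduced_def by auto
  obtain x' where x': "x' \<in> C" "\<delta> x' xi = s" "\<delta> x' y = s \<otimes> \<delta> xi y"
    using adjacent_chamber_exists[OF Cons.prems(2,3) s] by blast
  have y': "\<delta> x' y = word_prod G rest"
    using x'(3) Cons.prems(5) s rest word_prod_closed by simp
  have "reduced (rev rest @ s # rev pre)"
    using reduced_rev[OF Cons.prems(1)] by simp
  then have "reduced ([s] @ rev pre)" using reduced_appendD(2) by fastforce
  then have "reduced (s # rev pre)" "reduced (rev pre)" using reduced_appendD(2)[of "[s]"] by auto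
  then have "len (s \<otimes> \<delta> xi x0) = len (\<delta> xi x0) + 1"
    using Cons.prems(6) unfolding reduced_def by simp
  then have "\<delta> x' x0 = s \<otimes> \<delta> xi x0"
    using dist_adjacent_up[OF Cons.prems(2,4) x'(1) s x'(2)] by blast
  then have x0': "\<delta> x' x0 = word_prod G (rev (pre @ [s]))"
    using Cons.prems(6) s pre by (simp add: word_prod_append gen_closed)
  have "reduced ((pre @ [s]) @ rest)" using Cons.prems(1) by simp
  from Cons.IH[OF this x'(1) Cons.prems(3,4) y' x0'] show ?case by simp
qed

lemma dist_swap:
  assumes "x \<in> C" "y \<in> C"
  shows "\<delta> y x = inv (\<delta> x y)"
proof -
  obtain ws where ws: "reduced ws" "word_prod G ws = \<delta> x y"
    using reduced_word_exists dist_closed assms by blast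
  have "\<delta> y x = word_prod G (rev ([] @ ws))"
    by (rule dist_along_reduced_word[of "[]" ws x y x]) (use ws assms in auto)
  then show ?thesis using inv_word_prod[of ws] ws by (simp add: reduced_def)
qed

lemma residue_dist_trans:
  assumes Xs: "Xs \<subseteq> S" and C: "x \<in> C" "y \<in> C" "z \<in> C"
    and xy: "\<delta> x y \<in> generate G Xs" and yz: "\<delta> y z \<in> generate G Xs"
  shows "\<delta> x z \<in> generate G Xs"
proof -
  have "set ws \<subseteq> Xs \<Longrightarrow> x \<in> C \<Longrightarrow> \<delta> x y = word_prod G ws \<Longrightarrow> \<delta> x z \<in> generate G Xs" for ws x
  proof (induction ws arbitrary: x)
    case Nil
    then show ?case using C yz dist_eq_one_iff by auto
  next
    case (Cons s ws)
    have sX: "s \<in> Xs" and wsX: "set ws \<subseteq> Xs" using Cons.prems by auto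
    then have s: "s \<in> S" and ws: "set ws \<subseteq> S" using Xs by auto
    obtain x1 where x1: "x1 \<in> C" "\<delta> x1 x = s" "\<delta> x1 y = s \<otimes> \<delta> x y"
      using adjacent_chamber_exists[OF Cons.prems(2) C(2) s] by blast
    have "\<delta> x1 y = word_prod G ws"
      using x1(3) Cons.prems(3) s ws word_prod_closed by simp
    then have z1: "\<delta> x1 z \<in> generate G Xs" using Cons.IH[OF wsX x1(1)] by blast
    have "\<delta> x x1 = s" using dist_gen_sym[OF Cons.prems(2) x1(1) s x1(2)] .
    then have "\<delta> x z = s \<otimes> \<delta> x1 z \<or> \<delta> x z = \<delta> x1 z"
      using dist_adjacent_cases[OF x1(1) C(3) Cons.prems(2) s] by blast
    then show ?case using z1 sX generate.incl[of s Xs G] generate.eng by metis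
  qed
  moreover obtain ws where "set ws \<subseteq> Xs" "word_prod G ws = \<delta> x y"
    using word_of_generate xy Xs by blast
  ultimately show ?thesis using C by auto
qed

context
  assumes finite_panels: "\<And>s x. s \<in> S \<Longrightarrow> x \<in> C \<Longrightarrow> finite (panel G C \<delta> s x)"
begin

lemma finite_sphere: "w \<in> carrier G \<Longrightarrow> x \<in> C \<Longrightarrow> finite {y \<in> C. \<delta> x y = w}"
proof (induction "len w" arbitrary: w x rule: less_induct)
  case less
  show ?case
  proof (cases "w = \<one>")
    case True
    then have "{y \<in> C. \<delta> x y = w} \<subseteq> {x}" using dist_eq_one_iff less.prems by auto
    then show ?thesis using finite_subset by blast
  next
    case False
    obtain s where s: "s \<in> S" "len (s \<otimes> w) + 1 = len w"
      using left_descent_exists[OF less.prems(1) False] by blast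
    have "{y \<in> C. \<delta> x y = w} \<subseteq> (\<Union>x'\<in>panel G C \<delta> s x. {y \<in> C. \<delta> x' y = s \<otimes> w})"
    proof
      fix y assume y: "y \<in> {y \<in> C. \<delta> x y = w}"
      obtain x' where x': "x' \<in> C" "\<delta> x' x = s" "\<delta> x' y = s \<otimes> \<delta> x y"
        using adjacent_chamber_exists[OF less.prems(2) _ s(1)] y by blast
      have "x' \<in> panel G C \<delta> s x"
        unfolding panel_def using x' dist_gen_sym[OF less.prems(2) x'(1) s(1) x'(2)] by auto
      then show "y \<in> (\<Union>x'\<in>panel G C \<delta> s x. {y \<in> C. \<delta> x' y = s \<otimes> w})" using x' y by auto
    qed
    moreover have "finite (\<Union>x'\<in>panel G C \<delta> s x. {y \<in> C. \<delta> x' y = s \<otimes> w})"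
    proof (rule finite_UN_I)
      show "finite (panel G C \<delta> s x)" using finite_panels s less.prems by blast
      fix x' assume "x' \<in> panel G C \<delta> s x"
      then show "finite {y \<in> C. \<delta> x' y = s \<otimes> w}"
        using less.hyps[of "s \<otimes> w"] s less.prems(1) unfolding panel_def by auto
    qed
    ultimately show ?thesis using finite_subset by blast
  qed
qed

lemma finite_ball:
  assumes "finite Y" "Y \<subseteq> carrier G" "x \<in> C"
  shows "finite {y \<in> C. \<delta> x y \<in> Y}"
proof -
  have "{y \<in> C. \<delta> x y \<in> Y} = (\<Union>w\<in>Y. {y \<in> C. \<delta> x y = w})" by auto
  then show ?thesis using finite_sphere assms by auto
qed

end

end

section \<open>Twin buildings\<close>

locale twin_buildings = coxeter_group G S + B1: w_building G S C1 \<delta>1 + B2: w_building G S C2 \<delta>2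
  for G (structure) and S and C1 :: "'c set" and \<delta>1 and C2 :: "'c set" and \<delta>2 +
  fixes \<delta>s :: "'c \<Rightarrow> 'c \<Rightarrow> 'a"
  assumes twin_half1: "twin_half G S C1 \<delta>1 C2 \<delta>s" and twin_half2: "twin_half G S C2 \<delta>2 C1 \<delta>s"
    and codist_inv: "\<And>x y. x \<in> C1 \<Longrightarrow> y \<in> C2 \<Longrightarrow> \<delta>s x y \<in> carrier G \<and> \<delta>s y x = inv (\<delta>s x y)"
    and halves_disjoint: "C1 \<inter> C2 = {}"
begin

lemma codist_closed: "x \<in> C1 \<Longrightarrow> y \<in> C2 \<Longrightarrow> \<delta>s x y \<in> carrier G"
  using codist_inv by blast

lemma codist_swap: "x \<in> C1 \<Longrightarrow> y \<in> C2 \<Longrightarrow> \<delta>s y x = inv (\<delta>s x y)"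
  using codist_inv by blast

lemma codist_swap': "x \<in> C2 \<Longrightarrow> y \<in> C1 \<Longrightarrow> \<delta>s y x = inv (\<delta>s x y)"
  using codist_inv[of y x] by auto

lemma twin_buildings_swap: "twin_buildings G S C2 \<delta>2 C1 \<delta>1 \<delta>s"
  by (rule twin_buildings.intro[OF coxeter_group_axioms B2.w_building_axioms B1.w_building_axioms])
     (unfold_locales, use twin_half1 twin_half2 codist_inv halves_disjoint in auto)

lemma codist_adjacent_down: "x \<in> C1 \<Longrightarrow> y \<in> C2 \<Longrightarrow> x' \<in> C1 \<Longrightarrow> s \<in> S \<Longrightarrow> \<delta>1 x' x = s \<Longrightarrow>
    len (s \<otimes> \<delta>s x y) + 1 = len (\<delta>s x y) \<Longrightarrow> \<delta>s x' y = s \<otimes> \<delta>s x y"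
  and codist_adjacent_exists: "x \<in> C1 \<Longrightarrow> y \<in> C2 \<Longrightarrow> s \<in> S \<Longrightarrow>
    \<exists>x'\<in>C1. \<delta>1 x' x = s \<and> \<delta>s x' y = s \<otimes> \<delta>s x y"
  using twin_half1 unfolding twin_half_def by blast+

lemma codist_adjacent_cases:
  assumes x: "x \<in> C1" "y \<in> C2" "x' \<in> C1" and s: "s \<in> S" "\<delta>1 x' x = s"
  shows "\<delta>s x' y = s \<otimes> \<delta>s x y \<or> \<delta>s x' y = \<delta>s x y"
proof (cases "len (s \<otimes> \<delta>s x y) + 1 = len (\<delta>s x y)")
  case True
  then show ?thesis using codist_adjacent_down[OF assms] by blast
next
  case False
  define w where "w = \<delta>s x y"
  have w: "w \<in> carrier G" using codist_closed x w_def by simp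
  then have down: "len (s \<otimes> (s \<otimes> w)) + 1 = len (s \<otimes> w)"
    using False len_gen_mult[OF s(1) w] s w_def by auto
  obtain x1 where x1: "x1 \<in> C1" "\<delta>1 x1 x = s" "\<delta>s x1 y = s \<otimes> w"
    using codist_adjacent_exists[OF x(1,2) s(1)] w_def by blast
  show ?thesis
  proof (cases "x' = x1")
    case False
    then have "\<delta>1 x' x1 = s" using B1.panel_dist[OF x(1,3) x1(1) s x1(2)] by blast
    then have "\<delta>s x' y = s \<otimes> \<delta>s x1 y" using codist_adjacent_down[OF x1(1) x(2,3) s(1)] down x1(3) by simp
    then show ?thesis using x1(3) s w w_def by simp
  qed (use x1 w_def in simp)
qed

lemma opposite_of_adjacent:
  assumes x: "x \<in> C1" "y \<in> C1" "z \<in> C2" and s: "s \<in> S" "\<delta>1 x y = s" and yz: "\<delta>s y z = s"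
  shows "\<delta>s x z = \<one>"
proof -
  have "\<delta>s x z = s \<otimes> s \<or> \<delta>s x z = s"
    using codist_adjacent_cases[OF x(2,3,1) s] yz by blast
  moreover have "\<delta>s x z \<noteq> s"
  proof
    assume "\<delta>s x z = s"
    then have "\<delta>s y z = s \<otimes> s"
      using codist_adjacent_down[OF x(1,3,2) s(1) B1.dist_gen_sym[OF x(2,1) s]] s gen_square by simp
    then show False using yz gen_square s one_notin_gens by simp
  qed
  ultimately show ?thesis using gen_square s by simp
qed

end

lemma twin_buildings_of_twin_building:
  assumes "twin_building W S Cp \<delta>p Cm \<delta>m \<delta>s"
  shows "twin_buildings W S Cp \<delta>p Cm \<delta>m \<delta>s"
proof -
  have cs: "coxeter_system W S" and disj: "Cp \<inter> Cm = {}"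
    and bp: "building W S Cp \<delta>p" and bm: "building W S Cm \<delta>m"
    and codist: "\<forall>x\<in>Cp. \<forall>y\<in>Cm. \<delta>s x y \<in> carrier W \<and> \<delta>s y x = inv\<^bsub>W\<^esub> (\<delta>s x y)"
    and halves: "twin_half W S Cp \<delta>p Cm \<delta>s" "twin_half W S Cm \<delta>m Cp \<delta>s"
    using assms unfolding twin_building_def by blast+
  have cox: "coxeter_group W S"
    using cs coxeter_system_def coxeter_group.intro coxeter_group_axioms.intro by metis
  show ?thesis
    using w_building.intro[OF cox w_building_axioms.intro[OF bp]]
      w_building.intro[OF cox w_building_axioms.intro[OF bm]] codist halves disj
    by (intro twin_buildings.intro[OF cox] twin_buildings_axioms.intro) auto
qed

text \<open>For opposite chambers \<open>c1\<close>, \<open>c2\<close>, the unique chamber \<open>z \<in> C1\<close> with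
  \<open>\<delta>1 c1 z = u\<close> and \<open>\<delta>s c2 z = u\<close>; these chambers form the \<open>C1\<close>-half of the twin apartment
  containing \<open>c1\<close> and \<open>c2\<close>.\<close>

definition apartment_chamber :: "'c set \<Rightarrow> ('c \<Rightarrow> 'c \<Rightarrow> 'w) \<Rightarrow> ('c \<Rightarrow> 'c \<Rightarrow> 'w) \<Rightarrow> 'c \<Rightarrow> 'c \<Rightarrow> 'w \<Rightarrow> 'c"
  where "apartment_chamber C1 \<delta>1 \<delta>s c1 c2 u = (THE z. z \<in> C1 \<and> \<delta>1 c1 z = u \<and> \<delta>s c2 z = u)"

locale opposite_chambers = twin_buildings +
  fixes c1 c2
  assumes c1: "c1 \<in> C1" and c2: "c2 \<in> C2" and opposite: "\<delta>s c1 c2 = \<one>"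
begin

lemma opposite': "\<delta>s c2 c1 = \<one>"
  using codist_swap[OF c1 c2] opposite by simp

lemma opposite_chambers_swap: "opposite_chambers G S C2 \<delta>2 C1 \<delta>1 \<delta>s c2 c1"
  by (rule opposite_chambers.intro[OF twin_buildings_swap]) (unfold_locales, use c1 c2 opposite' in auto)

lemma apartment_step_exists:
  assumes a: "a \<in> carrier G" and s: "s \<in> S" and up: "len (a \<otimes> s) = len a + 1"
    and z: "z \<in> C1" "\<delta>1 c1 z = a" "\<delta>s c2 z = a"
  shows "\<exists>x\<in>C1. \<delta>1 x z = s \<and> \<delta>1 c1 x = a \<otimes> s \<and> \<delta>s c2 x = a \<otimes> s"
proof -
  obtain x where x: "x \<in> C1" "\<delta>1 x z = s" "\<delta>s x c2 = s \<otimes> \<delta>s z c2"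
    using codist_adjacent_exists[OF z(1) c2 s] by blast
  have zc: "\<delta>s z c2 = inv a" and zc': "\<delta>1 z c1 = inv a"
    using codist_swap'[OF c2 z(1)] B1.dist_swap[OF c1 z(1)] z by auto
  have codist: "\<delta>s c2 x = a \<otimes> s"
    using codist_swap[OF x(1) c2] x(3) zc inv_gen_mult[of "inv a" s] a s by simp
  have "len (s \<otimes> \<delta>1 z c1) = len (\<delta>1 z c1) + 1"
    using zc' inv_mult_gen[OF a s] len_inv[of "a \<otimes> s"] up a s by auto
  then have "\<delta>1 x c1 = inv (a \<otimes> s)"
    using B1.dist_adjacent_up[OF z(1) c1 x(1) s x(2)] zc' inv_mult_gen[OF a s] by simp
  then have "\<delta>1 c1 x = a \<otimes> s" using B1.dist_swap[OF x(1) c1] a s gen_closed by auto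
  then show ?thesis using x codist by blast
qed

lemma apartment_chamber_exists: "u \<in> carrier G \<Longrightarrow> \<exists>z\<in>C1. \<delta>1 c1 z = u \<and> \<delta>s c2 z = u"
proof (induction "len u" arbitrary: u rule: less_induct)
  case less
  show ?case
  proof (cases "u = \<one>")
    case True
    then show ?thesis using c1 opposite' by (intro bexI[of _ c1]) auto
  next
    case False
    obtain s where s: "s \<in> S" "len (u \<otimes> s) + 1 = len u"
      using right_descent_exists[OF less.prems False] by blast
    obtain a where a: "a \<in> carrier G" "u = a \<otimes> s" "len u = len a + 1"
      using s less.prems by (intro that[of "u \<otimes> s"]) auto
    then have up: "len (a \<otimes> s) = len a + 1" by simp
    obtain z where "z \<in> C1" "\<delta>1 c1 z = a" "\<delta>s c2 z = a" using less.hyps[of a] a by auto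
    from apartment_step_exists[OF a(1) s(1) up this] show ?thesis using a(2) by blast
  qed
qed

lemma apartment_step_down:
  assumes a: "a \<in> carrier G" and s: "s \<in> S" and up: "len (a \<otimes> s) = len a + 1"
    and y: "y \<in> C1" "\<delta>1 c1 y = a \<otimes> s" "\<delta>s c2 y = a \<otimes> s"
  shows "\<exists>x\<in>C1. \<delta>1 x y = s \<and> \<delta>1 c1 x = a \<and> \<delta>s c2 x = a"
proof -
  have ia: "s \<otimes> inv (a \<otimes> s) = inv a" using inv_mult_gen[OF a s] a s by simp
  have down: "len (s \<otimes> inv (a \<otimes> s)) + 1 = len (inv (a \<otimes> s))"
    using ia a s up len_inv[of "a \<otimes> s"] gen_closed by simp
  obtain x where x: "x \<in> C1" "\<delta>1 x y = s" "\<delta>1 x c1 = s \<otimes> \<delta>1 y c1"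
    using B1.adjacent_chamber_exists[OF y(1) c1 s] by blast
  have "\<delta>1 x c1 = inv a" using x(3) B1.dist_swap[OF c1 y(1)] y ia by simp
  then have "\<delta>1 c1 x = a" using B1.dist_swap[OF x(1) c1] a by simp
  moreover have "\<delta>s x c2 = inv a"
    using codist_adjacent_down[OF y(1) c2 x(1) s x(2)] codist_swap'[OF c2 y(1)] y down ia by simp
  then have "\<delta>s c2 x = a" using codist_swap[OF x(1) c2] a by simp
  ultimately show ?thesis using x by blast
qed

lemma apartment_chamber_unique:
  "u \<in> carrier G \<Longrightarrow> z \<in> C1 \<Longrightarrow> z' \<in> C1 \<Longrightarrow> \<delta>1 c1 z = u \<Longrightarrow> \<delta>s c2 z = u \<Longrightarrow>
   \<delta>1 c1 z' = u \<Longrightarrow> \<delta>s c2 z' = u \<Longrightarrow> z = z'"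
proof (induction "len u" arbitrary: u z z' rule: less_induct)
  case less
  show ?case
  proof (cases "u = \<one>")
    case True
    then show ?thesis using less.prems c1 B1.dist_eq_one_iff by metis
  next
    case False
    obtain s where s: "s \<in> S" "len (u \<otimes> s) + 1 = len u"
      using right_descent_exists[OF less.prems(1) False] by blast
    obtain a where a: "a \<in> carrier G" "u = a \<otimes> s" "len u = len a + 1"
      using s less.prems by (intro that[of "u \<otimes> s"]) auto
    have ia: "s \<otimes> inv u = inv a" using inv_mult_gen[OF a(1) s(1)] a(1,2) s(1) by simp
    have down: "len (s \<otimes> inv u) + 1 = len (inv u)" using ia a less.prems(1) by simp
    have up: "len (a \<otimes> s) = len a + 1" using a by simp
    have "\<delta>1 c1 z = a \<otimes> s" "\<delta>s c2 z = a \<otimes> s" "\<delta>1 c1 z' = a \<otimes> s" "\<delta>s c2 z' = a \<otimes> s"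
      using less.prems(4-7) a(2) by auto
    then obtain x x' where x: "x \<in> C1" "\<delta>1 x z = s" "\<delta>1 c1 x = a" "\<delta>s c2 x = a"
      and x': "x' \<in> C1" "\<delta>1 x' z' = s" "\<delta>1 c1 x' = a" "\<delta>s c2 x' = a"
      using apartment_step_down[OF a(1) s(1) up] less.prems(2,3) by meson
    have "x = x'" using less.hyps[of a x x'] a x x' by simp
    show ?thesis
    proof (rule ccontr)
      assume ne: "z \<noteq> z'"
      have "\<delta>1 z x = s" "\<delta>1 z' x = s"
        using B1.dist_gen_sym[OF less.prems(2) x(1) s(1) x(2)]
          B1.dist_gen_sym[OF less.prems(3) x'(1) s(1) x'(2)] \<open>x = x'\<close> by auto
      then have "\<delta>1 z' z = s" using B1.panel_dist[OF x(1) less.prems(3,2) s(1)] ne by metis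
      moreover have "\<delta>s z c2 = inv u" "\<delta>s z' c2 = inv u"
        using codist_swap'[OF c2] less.prems by auto
      ultimately have "s \<otimes> inv u = inv u"
        using codist_adjacent_down[OF less.prems(2) c2 less.prems(3) s(1)] down by simp
      then show False using gen_mult_neq[of "inv u" s] s(1) less.prems(1) by simp
    qed
  qed
qed

abbreviation \<sigma> where "\<sigma> \<equiv> apartment_chamber C1 \<delta>1 \<delta>s c1 c2"

lemma sigma_closed: "u \<in> carrier G \<Longrightarrow> \<sigma> u \<in> C1"
  and sigma_dist_base: "u \<in> carrier G \<Longrightarrow> \<delta>1 c1 (\<sigma> u) = u"
  and sigma_codist_base: "u \<in> carrier G \<Longrightarrow> \<delta>s c2 (\<sigma> u) = u"
proof -
  assume u: "u \<in> carrier G"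
  obtain x where x: "x \<in> C1" "\<delta>1 c1 x = u" "\<delta>s c2 x = u" using apartment_chamber_exists u by blast
  have "\<sigma> u = x" unfolding apartment_chamber_def
    by (rule the_equality) (use x apartment_chamber_unique[OF u] in blast)+
  then show "\<sigma> u \<in> C1" "\<delta>1 c1 (\<sigma> u) = u" "\<delta>s c2 (\<sigma> u) = u" using x by auto
qed

lemma sigma_eqI: "u \<in> carrier G \<Longrightarrow> x \<in> C1 \<Longrightarrow> \<delta>1 c1 x = u \<Longrightarrow> \<delta>s c2 x = u \<Longrightarrow> \<sigma> u = x"
  using apartment_chamber_unique sigma_closed sigma_dist_base sigma_codist_base by blast

lemma sigma_one [simp]: "\<sigma> \<one> = c1"
  using sigma_eqI[of "\<one>" c1] c1 opposite' by simp

lemma sigma_adjacent: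
  assumes a: "a \<in> carrier G" and s: "s \<in> S"
  shows "\<delta>1 (\<sigma> a) (\<sigma> (a \<otimes> s)) = s"
proof -
  have up_adjacent: "\<delta>1 (\<sigma> (b \<otimes> s)) (\<sigma> b) = s"
    if b: "b \<in> carrier G" and up: "len (b \<otimes> s) = len b + 1" for b
  proof -
    obtain x where x: "x \<in> C1" "\<delta>1 x (\<sigma> b) = s" "\<delta>1 c1 x = b \<otimes> s" "\<delta>s c2 x = b \<otimes> s"
      using apartment_step_exists[OF b s up sigma_closed[OF b] sigma_dist_base[OF b] sigma_codist_base[OF b]]
      by blast
    have "\<sigma> (b \<otimes> s) = x" using sigma_eqI[of "b \<otimes> s" x] x b s by blast
    then show ?thesis using x(2) by simp
  qed
  have as: "a \<otimes> s \<in> carrier G" using a s by auto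
  show ?thesis
  proof (cases "len (a \<otimes> s) = len a + 1")
    case True
    then show ?thesis using B1.dist_gen_sym sigma_closed a as s up_adjacent[OF a] by blast
  next
    case False
    then have "len (a \<otimes> s \<otimes> s) = len (a \<otimes> s) + 1" using len_mult_gen[OF s a] a s by auto
    then show ?thesis using up_adjacent[OF as] a s by simp
  qed
qed

lemma sigma_dist_mult: "v \<in> carrier G \<Longrightarrow> a \<in> carrier G \<Longrightarrow> \<delta>1 (\<sigma> a) (\<sigma> (a \<otimes> v)) = v"
proof (induction "len v" arbitrary: v rule: less_induct)
  case less
  show ?case
  proof (cases "v = \<one>")
    case True
    then show ?thesis using less.prems sigma_closed by simp
  next
    case False
    obtain s where s: "s \<in> S" "len (v \<otimes> s) + 1 = len v"
      using right_descent_exists[OF less.prems(1) False] by blast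
    obtain v' where v': "v' \<in> carrier G" "v = v' \<otimes> s" "len v = len v' + 1"
      using s less.prems by (intro that[of "v \<otimes> s"]) auto
    have av: "a \<otimes> v' \<in> carrier G" "a \<otimes> v \<in> carrier G" using v' less.prems by auto
    have C: "\<sigma> (a \<otimes> v') \<in> C1" "\<sigma> (a \<otimes> v) \<in> C1" "\<sigma> a \<in> C1"
      using sigma_closed av less.prems by auto
    have "\<delta>1 (\<sigma> (a \<otimes> v')) (\<sigma> (a \<otimes> v)) = s"
      using sigma_adjacent[OF av(1) s(1)] v' less.prems s by (simp add: m_assoc gen_closed)
    then have adj: "\<delta>1 (\<sigma> (a \<otimes> v)) (\<sigma> (a \<otimes> v')) = s" using B1.dist_gen_sym C s by blast
    have dist_back: "\<delta>1 (\<sigma> (a \<otimes> v')) (\<sigma> a) = inv v'"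
      using B1.dist_swap[OF C(3,1)] less.hyps[of v'] v' less.prems by simp
    have "len (s \<otimes> inv v') = len (inv v') + 1"
      using inv_mult_gen[OF v'(1) s(1)] v' less.prems s by (metis len_inv m_closed gen_closed)
    then have "\<delta>1 (\<sigma> (a \<otimes> v)) (\<sigma> a) = inv v"
      using B1.dist_adjacent_up[OF C(1,3,2) s(1) adj] dist_back inv_mult_gen[OF v'(1) s(1)] v' by simp
    then show ?thesis using B1.dist_swap[OF C(2,3)] less.prems by simp
  qed
qed

lemma sigma_dist: "a \<in> carrier G \<Longrightarrow> b \<in> carrier G \<Longrightarrow> \<delta>1 (\<sigma> a) (\<sigma> b) = inv a \<otimes> b"
  using sigma_dist_mult[of "inv a \<otimes> b" a] by (simp add: m_assoc[symmetric])

abbreviation \<sigma>' where "\<sigma>' \<equiv> apartment_chamber C2 \<delta>2 \<delta>s c2 c1"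

lemmas sigma'_closed = opposite_chambers.sigma_closed[OF opposite_chambers_swap]
  and sigma'_codist_base = opposite_chambers.sigma_codist_base[OF opposite_chambers_swap]
  and sigma'_adjacent = opposite_chambers.sigma_adjacent[OF opposite_chambers_swap]
  and sigma'_dist = opposite_chambers.sigma_dist[OF opposite_chambers_swap]
  and sigma'_one = opposite_chambers.sigma_one[OF opposite_chambers_swap]

text \<open>\<open>\<sigma> (u' \<otimes> s)\<close> is \<open>s\<close>-adjacent to \<open>\<sigma> u'\<close>, and \<open>\<sigma>' (u' \<otimes> y \<otimes> r)\<close> is \<open>r\<close>-adjacent to
  \<open>\<sigma>' (u' \<otimes> y)\<close>; the two resulting pairs of alternatives for the codistance share only the
  claimed value.\<close>

lemma sigma_codist_step:
  assumes u': "u' \<in> carrier G" and s: "s \<in> S"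
    and IH: "\<forall>b\<in>carrier G. \<delta>s (\<sigma> u') (\<sigma>' b) = inv u' \<otimes> b"
    and y: "y \<in> carrier G" and r: "r \<in> S"
    and up: "len (s \<otimes> y) = len y + 1" "len (s \<otimes> (y \<otimes> r)) = len (y \<otimes> r) + 1"
    and hyp: "\<delta>s (\<sigma> (u' \<otimes> s)) (\<sigma>' (u' \<otimes> y)) = s \<otimes> y"
  shows "\<delta>s (\<sigma> (u' \<otimes> s)) (\<sigma>' (u' \<otimes> (y \<otimes> r))) = s \<otimes> (y \<otimes> r)"
proof -
  define x where "x = \<sigma> (u' \<otimes> s)"
  define b where "b = u' \<otimes> y"
  have b: "b \<in> carrier G" "u' \<otimes> (y \<otimes> r) = b \<otimes> r" using b_def u' y r by (auto simp: m_assoc gen_closed)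
  have x: "x \<in> C1" using sigma_closed x_def u' s gen_closed by auto
  have C2: "\<sigma>' b \<in> C2" "\<sigma>' (b \<otimes> r) \<in> C2" using sigma'_closed b r gen_closed by auto
  have "\<delta>2 (\<sigma>' (b \<otimes> r)) (\<sigma>' b) = r"
    using B2.dist_gen_sym[OF C2(2,1) r] sigma'_adjacent[OF b(1) r] by blast
  then have "\<delta>s (\<sigma>' (b \<otimes> r)) x = r \<otimes> \<delta>s (\<sigma>' b) x \<or> \<delta>s (\<sigma>' (b \<otimes> r)) x = \<delta>s (\<sigma>' b) x"
    using twin_buildings.codist_adjacent_cases[OF twin_buildings_swap C2(1) x C2(2) r] by blast
  moreover have "\<delta>s (\<sigma>' b) x = inv (s \<otimes> y)" using codist_swap[OF x C2(1)] hyp x_def b_def by simp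
  ultimately have first: "\<delta>s x (\<sigma>' (b \<otimes> r)) = s \<otimes> y \<otimes> r \<or> \<delta>s x (\<sigma>' (b \<otimes> r)) = s \<otimes> y"
    using codist_swap'[OF C2(2) x] inv_gen_mult[of "inv (s \<otimes> y)" r] s y r gen_closed by auto
  have "\<delta>1 x (\<sigma> u') = s"
    using sigma_adjacent[OF u' s] B1.dist_gen_sym sigma_closed u' x x_def s by blast
  moreover have "\<delta>s (\<sigma> u') (\<sigma>' (b \<otimes> r)) = y \<otimes> r"
    using bspec[OF IH, of "b \<otimes> r"] b_def u' y r by (simp add: m_assoc[symmetric] gen_closed)
  ultimately have "\<delta>s x (\<sigma>' (b \<otimes> r)) = s \<otimes> (y \<otimes> r) \<or> \<delta>s x (\<sigma>' (b \<otimes> r)) = y \<otimes> r"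
    using codist_adjacent_cases[OF sigma_closed[OF u'] C2(2) x s] by simp
  moreover have "s \<otimes> y \<noteq> y \<otimes> r"
  proof
    assume "s \<otimes> y = y \<otimes> r"
    then have "s \<otimes> (y \<otimes> r) = y" using y s by (metis gen_gen_mult)
    then show False using up \<open>s \<otimes> y = y \<otimes> r\<close> by simp
  qed
  moreover have "s \<otimes> y \<otimes> r \<noteq> y \<otimes> r"
    using gen_mult_neq[OF y s] r_cancel[of r "s \<otimes> y" y] y s r gen_closed by auto
  ultimately show ?thesis using first x_def b s y r by (auto simp: m_assoc)
qed

lemma sigma_codist_step_iff:
  assumes u': "u' \<in> carrier G" and s: "s \<in> S"
    and IH: "\<forall>b\<in>carrier G. \<delta>s (\<sigma> u') (\<sigma>' b) = inv u' \<otimes> b"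
    and y: "y \<in> carrier G" and r: "r \<in> S"
    and up: "len (s \<otimes> y) = len y + 1" "len (s \<otimes> (y \<otimes> r)) = len (y \<otimes> r) + 1"
  shows "\<delta>s (\<sigma> (u' \<otimes> s)) (\<sigma>' (u' \<otimes> y)) = s \<otimes> y \<longleftrightarrow>
    \<delta>s (\<sigma> (u' \<otimes> s)) (\<sigma>' (u' \<otimes> (y \<otimes> r))) = s \<otimes> (y \<otimes> r)"
proof
  assume "\<delta>s (\<sigma> (u' \<otimes> s)) (\<sigma>' (u' \<otimes> y)) = s \<otimes> y"
  then show "\<delta>s (\<sigma> (u' \<otimes> s)) (\<sigma>' (u' \<otimes> (y \<otimes> r))) = s \<otimes> (y \<otimes> r)"
    by (rule sigma_codist_step[OF u' s IH y r up])
next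
  assume "\<delta>s (\<sigma> (u' \<otimes> s)) (\<sigma>' (u' \<otimes> (y \<otimes> r))) = s \<otimes> (y \<otimes> r)"
  moreover have "y \<otimes> r \<otimes> r = y" using y r by simp
  ultimately show "\<delta>s (\<sigma> (u' \<otimes> s)) (\<sigma>' (u' \<otimes> y)) = s \<otimes> y"
    using sigma_codist_step[OF u' s IH _ r, of "y \<otimes> r"] y r up by (simp add: gen_closed)
qed

lemma sigma_codist: "u \<in> carrier G \<Longrightarrow> v \<in> carrier G \<Longrightarrow> \<delta>s (\<sigma> u) (\<sigma>' v) = inv u \<otimes> v"
proof (induction "len u" arbitrary: u v rule: less_induct)
  case less
  show ?case
  proof (cases "u = \<one>")
    case True
    then show ?thesis using sigma'_codist_base less.prems by simp
  next
    case False
    obtain s where s: "s \<in> S" "len (u \<otimes> s) + 1 = len u"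
      using right_descent_exists[OF less.prems(1) False] by blast
    obtain u' where u': "u' \<in> carrier G" "u = u' \<otimes> s" "len u = len u' + 1"
      using s less.prems by (intro that[of "u \<otimes> s"]) auto
    have iu: "inv u = s \<otimes> inv u'" using inv_mult_gen u' s by simp
    have IH: "\<forall>b\<in>carrier G. \<delta>s (\<sigma> u') (\<sigma>' b) = inv u' \<otimes> b"
      using less.hyps[of u'] u' by simp
    have C: "\<sigma> u \<in> C1" "\<sigma> u' \<in> C1" "\<sigma>' v \<in> C2"
      using sigma_closed sigma'_closed less.prems u' by auto
    have adj: "\<delta>1 (\<sigma> u) (\<sigma> u') = s"
      using sigma_adjacent[OF u'(1) s(1)] B1.dist_gen_sym C s u' by metis
    define y where "y = inv u' \<otimes> v"
    have y: "y \<in> carrier G" "u' \<otimes> y = v" using y_def u' less.prems by (auto simp: m_assoc[symmetric])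
    have goal: "inv u \<otimes> v = s \<otimes> y" using iu y_def u' less.prems s by (simp add: m_assoc gen_closed)
    show ?thesis
    proof (cases "len (s \<otimes> y) + 1 = len y")
      case True
      then show ?thesis
        using codist_adjacent_down[OF C(2,3,1) s(1) adj] IH less.prems goal y_def by simp
    next
      case False
      define R where "R y \<longleftrightarrow> \<delta>s (\<sigma> u) (\<sigma>' (u' \<otimes> y)) = s \<otimes> y" for y
      have step: "R y = R (y \<otimes> r)" if "y \<in> carrier G" "r \<in> S"
        "len (s \<otimes> y) = len y + 1" "len (s \<otimes> (y \<otimes> r)) = len (y \<otimes> r) + 1" for y r
        unfolding R_def u'(2) by (rule sigma_codist_step_iff[OF u'(1) s(1) IH that])
      have iu': "inv u' \<in> carrier G" "len (s \<otimes> inv u') = len (inv u') + 1"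
        using u' iu less.prems len_inv[of u] len_inv[of u'] by auto
      have "R (inv u')"
        using codist_swap'[OF c2 C(1)] sigma_codist_base less.prems u' iu unfolding R_def
        by (simp add: r_inv sigma'_one)
      then have "R \<one>" using positive_half_connected[OF s(1) step iu'] by blast
      moreover have "len (s \<otimes> y) = len y + 1" using False len_gen_mult[OF s(1) y(1)] by auto
      ultimately have "R y" using positive_half_connected[OF s(1) step y(1)] by blast
      then show ?thesis using goal y unfolding R_def by simp
    qed
  qed
qed

lemma twin_apartment_sigma: "twin_apartment G C1 \<delta>1 C2 \<delta>2 \<delta>s (\<sigma> ` carrier G \<union> \<sigma>' ` carrier G)"
  unfolding twin_apartment_def
proof (rule exI[of _ \<sigma>], rule exI[of _ \<sigma>'], intro conjI ballI)
  fix u v assume u: "u \<in> carrier G" and v: "v \<in> carrier G"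
  show "\<delta>s (\<sigma>' u) (\<sigma> v) = inv u \<otimes> v"
    using codist_swap[OF sigma_closed[OF v] sigma'_closed[OF u]] sigma_codist[OF v u] u v
    by (simp add: inv_mult_group)
qed (use sigma_closed sigma'_closed sigma_dist sigma'_dist sigma_codist in auto)

lemma twin_apartment_containing:
  assumes z: "z \<in> C1" "\<delta>1 c1 z = u" "\<delta>s c2 z = u" and u: "u \<in> carrier G"
  shows "\<exists>A. twin_apartment G C1 \<delta>1 C2 \<delta>2 \<delta>s A \<and> c1 \<in> A \<and> z \<in> A"
proof -
  have "\<sigma> \<one> = c1" "\<sigma> u = z" using sigma_eqI z u by auto
  then show ?thesis using twin_apartment_sigma u one_closed by (metis UnI1 image_eqI)
qed

end

definition twin_apartment_param :: "('w, 'a) monoid_scheme \<Rightarrow> 'c set \<Rightarrow> ('c \<Rightarrow> 'c \<Rightarrow> 'w) \<Rightarrow>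
    'c set \<Rightarrow> ('c \<Rightarrow> 'c \<Rightarrow> 'w) \<Rightarrow> ('c \<Rightarrow> 'c \<Rightarrow> 'w) \<Rightarrow> ('w \<Rightarrow> 'c) \<Rightarrow> ('w \<Rightarrow> 'c) \<Rightarrow> 'c set \<Rightarrow> bool" where
  "twin_apartment_param W Cp \<delta>p Cm \<delta>m \<delta>s f g \<Sigma> \<longleftrightarrow>
     (\<forall>u\<in>carrier W. f u \<in> Cp \<and> g u \<in> Cm) \<and>
     (\<forall>u\<in>carrier W. \<forall>v\<in>carrier W.
        \<delta>p (f u) (f v) = inv\<^bsub>W\<^esub> u \<otimes>\<^bsub>W\<^esub> v \<and> \<delta>m (g u) (g v) = inv\<^bsub>W\<^esub> u \<otimes>\<^bsub>W\<^esub> v \<and>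
        \<delta>s (f u) (g v) = inv\<^bsub>W\<^esub> u \<otimes>\<^bsub>W\<^esub> v \<and> \<delta>s (g u) (f v) = inv\<^bsub>W\<^esub> u \<otimes>\<^bsub>W\<^esub> v) \<and>
     \<Sigma> = f ` carrier W \<union> g ` carrier W"

lemma twin_apartment_iff_param:
  "twin_apartment W Cp \<delta>p Cm \<delta>m \<delta>s \<Sigma> \<longleftrightarrow> (\<exists>f g. twin_apartment_param W Cp \<delta>p Cm \<delta>m \<delta>s f g \<Sigma>)"
  unfolding twin_apartment_def twin_apartment_param_def by blast

lemma twin_apartment_param_swap:
  "twin_apartment_param W Cp \<delta>p Cm \<delta>m \<delta>s f g \<Sigma> \<Longrightarrow> twin_apartment_param W Cm \<delta>m Cp \<delta>p \<delta>s g f \<Sigma>"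
  unfolding twin_apartment_param_def by blast

lemma twin_apartment_swap:
  "twin_apartment W Cp \<delta>p Cm \<delta>m \<delta>s \<Sigma> \<Longrightarrow> twin_apartment W Cm \<delta>m Cp \<delta>p \<delta>s \<Sigma>"
  using twin_apartment_param_swap twin_apartment_iff_param by metis

lemma strongly_transitive_action_swap:
  assumes "strongly_transitive_action Gr act W Cp \<delta>p Cm \<delta>m \<delta>s"
  shows "strongly_transitive_action Gr act W Cm \<delta>m Cp \<delta>p \<delta>s"
proof -
  have "twin_apartment W Cp \<delta>p Cm \<delta>m \<delta>s \<Sigma> \<longleftrightarrow> twin_apartment W Cm \<delta>m Cp \<delta>p \<delta>s \<Sigma>" for \<Sigma>
    using twin_apartment_swap by blast
  with assms show ?thesis unfolding strongly_transitive_action_def by (simp add: Un_commute)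
qed

lemma (in group) twin_apartment_param_translate:
  assumes param: "twin_apartment_param G Cp \<delta>p Cm \<delta>m \<delta>s f g \<Sigma>" and a: "a \<in> carrier G"
  shows "twin_apartment_param G Cp \<delta>p Cm \<delta>m \<delta>s (\<lambda>v. f (a \<otimes> v)) (\<lambda>v. g (a \<otimes> v)) \<Sigma>"
proof -
  have inv_a: "inv (a \<otimes> u) \<otimes> (a \<otimes> v) = inv u \<otimes> v" if "u \<in> carrier G" "v \<in> carrier G" for u v
    using that a by (simp add: inv_mult_group m_assoc[symmetric]) (simp add: m_assoc)
  have "w \<in> (\<lambda>v. a \<otimes> v) ` carrier G" if "w \<in> carrier G" for w
    using that a by (intro image_eqI[of _ _ "inv a \<otimes> w"]) (auto simp: m_assoc[symmetric])
  then have "(\<lambda>v. a \<otimes> v) ` carrier G = carrier G" using a by auto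
  then have "f ` carrier G = (\<lambda>v. f (a \<otimes> v)) ` carrier G" "g ` carrier G = (\<lambda>v. g (a \<otimes> v)) ` carrier G"
    by (metis image_image)+
  then show ?thesis using param a inv_a unfolding twin_apartment_param_def by auto
qed

lemma (in opposite_chambers) normalized_param_exists:
  assumes "twin_apartment G C1 \<delta>1 C2 \<delta>2 \<delta>s \<Sigma>" "c1 \<in> \<Sigma>" "c2 \<in> \<Sigma>"
  shows "\<exists>f g. twin_apartment_param G C1 \<delta>1 C2 \<delta>2 \<delta>s f g \<Sigma> \<and> f \<one> = c1 \<and> g \<one> = c2"
proof -
  obtain f g where param: "twin_apartment_param G C1 \<delta>1 C2 \<delta>2 \<delta>s f g \<Sigma>"
    using assms(1) twin_apartment_iff_param by blast
  then have fg: "\<forall>u\<in>carrier G. f u \<in> C1 \<and> g u \<in> C2" "\<Sigma> = f ` carrier G \<union> g ` carrier G"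
    and codist: "\<forall>u\<in>carrier G. \<forall>v\<in>carrier G. \<delta>s (f u) (g v) = inv u \<otimes> v"
    unfolding twin_apartment_param_def by auto
  have "c1 \<notin> g ` carrier G" "c2 \<notin> f ` carrier G" using fg(1) c1 c2 halves_disjoint by auto
  then obtain a b where a: "a \<in> carrier G" "f a = c1" and b: "b \<in> carrier G" "g b = c2"
    using assms(2,3) fg(2) by blast
  have "inv a \<otimes> b = \<one>" using codist a b opposite by metis
  then have "b = a" using a b inv_solve_left'[of "\<one>" a b] by simp
  then have "twin_apartment_param G C1 \<delta>1 C2 \<delta>2 \<delta>s (\<lambda>v. f (a \<otimes> v)) (\<lambda>v. g (a \<otimes> v)) \<Sigma> \<and>
      f (a \<otimes> \<one>) = c1 \<and> g (a \<otimes> \<one>) = c2"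
    using twin_apartment_param_translate[OF param a(1)] a b by simp
  then show ?thesis by blast
qed

section \<open>Group actions on buildings\<close>

locale building_action = w_building +
  fixes Gr :: "('g, 'e) monoid_scheme" and act :: "'g \<Rightarrow> 'c \<Rightarrow> 'c"
  assumes group_Gr: "group Gr"
    and act_closed: "\<And>g x. g \<in> carrier Gr \<Longrightarrow> x \<in> C \<Longrightarrow> act g x \<in> C"
    and act_one: "\<And>x. x \<in> C \<Longrightarrow> act \<one>\<^bsub>Gr\<^esub> x = x"
    and act_mult: "\<And>g h x. g \<in> carrier Gr \<Longrightarrow> h \<in> carrier Gr \<Longrightarrow> x \<in> C \<Longrightarrow>
      act (g \<otimes>\<^bsub>Gr\<^esub> h) x = act g (act h x)"
    and act_dist: "\<And>g x y. g \<in> carrier Gr \<Longrightarrow> x \<in> C \<Longrightarrow> y \<in> C \<Longrightarrow> \<delta> (act g x) (act g y) = \<delta> x y"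
begin

interpretation Gr: group Gr by (rule group_Gr)

lemma act_inv_act: "g \<in> carrier Gr \<Longrightarrow> x \<in> C \<Longrightarrow> act (inv\<^bsub>Gr\<^esub> g) (act g x) = x"
  using act_mult[of "inv\<^bsub>Gr\<^esub> g" g x] act_one by simp

lemma act_act_inv: "g \<in> carrier Gr \<Longrightarrow> x \<in> C \<Longrightarrow> act g (act (inv\<^bsub>Gr\<^esub> g) x) = x"
  using act_mult[of g "inv\<^bsub>Gr\<^esub> g" x] act_one by simp

lemma residue_stabilizer_subgroup:
  assumes Xs: "Xs \<subseteq> S" and x: "x \<in> C"
  shows "subgroup {g \<in> carrier Gr. \<delta> x (act g x) \<in> generate G Xs} Gr"
proof (rule subgroup.intro)
  fix g h
  assume g: "g \<in> {g \<in> carrier Gr. \<delta> x (act g x) \<in> generate G Xs}"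
    and h: "h \<in> {g \<in> carrier Gr. \<delta> x (act g x) \<in> generate G Xs}"
  have gh: "g \<in> carrier Gr" "h \<in> carrier Gr" using g h by auto
  have C: "act g x \<in> C" "act g (act h x) \<in> C" using act_closed gh x by auto
  have "\<delta> (act g x) (act g (act h x)) \<in> generate G Xs"
    using act_dist[OF gh(1) x act_closed[OF gh(2) x]] h by simp
  then have "\<delta> x (act g (act h x)) \<in> generate G Xs"
    using residue_dist_trans[OF Xs x C] g by simp
  then show "g \<otimes>\<^bsub>Gr\<^esub> h \<in> {g \<in> carrier Gr. \<delta> x (act g x) \<in> generate G Xs}"
    using act_mult[OF gh x] gh by simp
next
  fix g assume g: "g \<in> {g \<in> carrier Gr. \<delta> x (act g x) \<in> generate G Xs}"
  then have gc: "g \<in> carrier Gr" by simp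
  have "\<delta> x (act (inv\<^bsub>Gr\<^esub> g) x) = \<delta> (act g x) x"
    using act_dist[OF gc x act_closed[OF _ x], of "inv\<^bsub>Gr\<^esub> g"] act_act_inv[OF gc x] gc by simp
  also have "\<dots> = inv (\<delta> x (act g x))" using dist_swap[OF x act_closed[OF gc x]] .
  finally show "inv\<^bsub>Gr\<^esub> g \<in> {g \<in> carrier Gr. \<delta> x (act g x) \<in> generate G Xs}"
    using g gc subgroup.m_inv_closed[OF generate_is_subgroup] Xs gens_subset by auto
qed (use act_one x generate.one in auto)

lemma conjset_residue_stabilizer:
  assumes n: "n \<in> carrier Gr" and x: "x \<in> C"
  shows "conjset Gr n {h \<in> carrier Gr. \<delta> x (act h x) \<in> Y} =
    {g \<in> carrier Gr. \<delta> (act n x) (act g (act n x)) \<in> Y}"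
proof -
  have conj_dist: "\<delta> (act n x) (act g (act n x)) = \<delta> x (act h x)"
    if gh: "g \<in> carrier Gr" "h \<in> carrier Gr" "g \<otimes>\<^bsub>Gr\<^esub> n = n \<otimes>\<^bsub>Gr\<^esub> h" for g h
  proof -
    have "act g (act n x) = act n (act h x)" using act_mult[OF gh(1) n x] act_mult[OF n gh(2) x] gh(3) by simp
    then show ?thesis using act_dist[OF n x act_closed[OF gh(2) x]] by simp
  qed
  show ?thesis
  proof (intro equalityI subsetI)
    fix g assume "g \<in> conjset Gr n {h \<in> carrier Gr. \<delta> x (act h x) \<in> Y}"
    then obtain h where h: "h \<in> carrier Gr" "\<delta> x (act h x) \<in> Y" and g: "g = n \<otimes>\<^bsub>Gr\<^esub> h \<otimes>\<^bsub>Gr\<^esub> inv\<^bsub>Gr\<^esub> n"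
      unfolding conjset_def r_coset_def l_coset_def by auto
    have "g \<in> carrier Gr" "g \<otimes>\<^bsub>Gr\<^esub> n = n \<otimes>\<^bsub>Gr\<^esub> h" using g h(1) n by (auto simp: Gr.m_assoc)
    then show "g \<in> {g \<in> carrier Gr. \<delta> (act n x) (act g (act n x)) \<in> Y}" using conj_dist h by simp
  next
    fix g assume g: "g \<in> {g \<in> carrier Gr. \<delta> (act n x) (act g (act n x)) \<in> Y}"
    define h where "h = inv\<^bsub>Gr\<^esub> n \<otimes>\<^bsub>Gr\<^esub> g \<otimes>\<^bsub>Gr\<^esub> n"
    have h: "h \<in> carrier Gr" "g \<otimes>\<^bsub>Gr\<^esub> n = n \<otimes>\<^bsub>Gr\<^esub> h"
      using h_def n g by (auto simp: Gr.m_assoc[symmetric])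
    have "\<delta> x (act h x) \<in> Y" using conj_dist[of g h] h g by simp
    moreover have "g = n \<otimes>\<^bsub>Gr\<^esub> h \<otimes>\<^bsub>Gr\<^esub> inv\<^bsub>Gr\<^esub> n"
      using Gr.inv_solve_right[of g "n \<otimes>\<^bsub>Gr\<^esub> h" n] h n g by auto
    ultimately show "g \<in> conjset Gr n {h \<in> carrier Gr. \<delta> x (act h x) \<in> Y}"
      unfolding conjset_def r_coset_def l_coset_def using h by blast
  qed
qed

end

section \<open>Strongly transitive actions and the twin BN-pair\<close>

locale twin_bn_pair = opposite_chambers +
  fixes Gr :: "('g, 'e) monoid_scheme" and act :: "'g \<Rightarrow> 'c \<Rightarrow> 'c" and \<Sigma> :: "'c set"
    and f0 g0 :: "'a \<Rightarrow> 'c"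
  assumes strongly_transitive: "strongly_transitive_action Gr act G C1 \<delta>1 C2 \<delta>2 \<delta>s"
    and apartment_param: "twin_apartment_param G C1 \<delta>1 C2 \<delta>2 \<delta>s f0 g0 \<Sigma>"
    and f0_one: "f0 \<one> = c1" and g0_one: "g0 \<one> = c2"
begin

lemmas strongly_transitive_unfolded = strongly_transitive[unfolded strongly_transitive_action_def]

lemma group_Gr: "group Gr"
  using strongly_transitive_unfolded by (rule conjunct1)

lemma act_closed: "g \<in> carrier Gr \<Longrightarrow> (\<forall>x\<in>C1. act g x \<in> C1) \<and> (\<forall>x\<in>C2. act g x \<in> C2)"
  using strongly_transitive_unfolded[THEN conjunct2, THEN conjunct1] by blast

lemma act_one: "x \<in> C1 \<union> C2 \<Longrightarrow> act \<one>\<^bsub>Gr\<^esub> x = x"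
  using strongly_transitive_unfolded[THEN conjunct2, THEN conjunct2, THEN conjunct1] by blast

lemma act_mult: "g \<in> carrier Gr \<Longrightarrow> h \<in> carrier Gr \<Longrightarrow> x \<in> C1 \<union> C2 \<Longrightarrow>
    act (g \<otimes>\<^bsub>Gr\<^esub> h) x = act g (act h x)"
  using strongly_transitive_unfolded[THEN conjunct2, THEN conjunct2, THEN conjunct2, THEN conjunct1]
  by blast

lemma act_isometric: "g \<in> carrier Gr \<Longrightarrow>
    (\<forall>x\<in>C1. \<forall>y\<in>C1. \<delta>1 (act g x) (act g y) = \<delta>1 x y) \<and>
    (\<forall>x\<in>C2. \<forall>y\<in>C2. \<delta>2 (act g x) (act g y) = \<delta>2 x y) \<and>
    (\<forall>x\<in>C1. \<forall>y\<in>C2. \<delta>s (act g x) (act g y) = \<delta>s x y \<and> \<delta>s (act g y) (act g x) = \<delta>s y x)"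
  using strongly_transitive_unfolded[THEN conjunct2, THEN conjunct2, THEN conjunct2, THEN conjunct2,
      THEN conjunct1] by blast

lemma apartment_transitive: "twin_apartment G C1 \<delta>1 C2 \<delta>2 \<delta>s A \<Longrightarrow> twin_apartment G C1 \<delta>1 C2 \<delta>2 \<delta>s A' \<Longrightarrow>
    x \<in> A \<Longrightarrow> x' \<in> A' \<Longrightarrow> x \<in> C1 \<and> x' \<in> C1 \<or> x \<in> C2 \<and> x' \<in> C2 \<Longrightarrow>
    \<exists>g\<in>carrier Gr. act g ` A = A' \<and> act g x = x'"
  using strongly_transitive_unfolded[THEN conjunct2, THEN conjunct2, THEN conjunct2, THEN conjunct2,
      THEN conjunct2] by blast

lemma act_closed1: "g \<in> carrier Gr \<Longrightarrow> x \<in> C1 \<Longrightarrow> act g x \<in> C1"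
  and act_closed2: "g \<in> carrier Gr \<Longrightarrow> x \<in> C2 \<Longrightarrow> act g x \<in> C2"
  using act_closed by blast+

lemma act_dist1: "g \<in> carrier Gr \<Longrightarrow> x \<in> C1 \<Longrightarrow> y \<in> C1 \<Longrightarrow> \<delta>1 (act g x) (act g y) = \<delta>1 x y"
  and act_dist2: "g \<in> carrier Gr \<Longrightarrow> x \<in> C2 \<Longrightarrow> y \<in> C2 \<Longrightarrow> \<delta>2 (act g x) (act g y) = \<delta>2 x y"
  and act_codist: "g \<in> carrier Gr \<Longrightarrow> x \<in> C1 \<Longrightarrow> y \<in> C2 \<Longrightarrow> \<delta>s (act g x) (act g y) = \<delta>s x y"
  using act_isometric by blast+

interpretation Gr: group Gr by (rule group_Gr)

lemma building_action1: "building_action G S C1 \<delta>1 Gr act"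
  by (rule building_action.intro[OF B1.w_building_axioms], unfold_locales)
     (use group_Gr act_closed1 act_one act_mult act_dist1 in auto)

lemma building_action2: "building_action G S C2 \<delta>2 Gr act"
  by (rule building_action.intro[OF B2.w_building_axioms], unfold_locales)
     (use group_Gr act_closed2 act_one act_mult act_dist2 in auto)

lemma f0_closed: "u \<in> carrier G \<Longrightarrow> f0 u \<in> C1"
  and g0_closed: "u \<in> carrier G \<Longrightarrow> g0 u \<in> C2"
  and f0_dist: "u \<in> carrier G \<Longrightarrow> v \<in> carrier G \<Longrightarrow> \<delta>1 (f0 u) (f0 v) = inv u \<otimes> v"
  and f0_g0_codist: "u \<in> carrier G \<Longrightarrow> v \<in> carrier G \<Longrightarrow> \<delta>s (f0 u) (g0 v) = inv u \<otimes> v"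
  and g0_f0_codist: "u \<in> carrier G \<Longrightarrow> v \<in> carrier G \<Longrightarrow> \<delta>s (g0 u) (f0 v) = inv u \<otimes> v"
  and apartment_eq: "\<Sigma> = f0 ` carrier G \<union> g0 ` carrier G"
  using apartment_param unfolding twin_apartment_param_def by blast+

lemma twin_apartment_base: "twin_apartment G C1 \<delta>1 C2 \<delta>2 \<delta>s \<Sigma>"
  using apartment_param twin_apartment_iff_param by blast

lemma c1_in_apartment: "c1 \<in> \<Sigma>" and c2_in_apartment: "c2 \<in> \<Sigma>"
  using apartment_eq f0_one g0_one by auto

lemma apartment_chamber1: "x \<in> \<Sigma> \<Longrightarrow> x \<in> C1 \<Longrightarrow> \<exists>a\<in>carrier G. x = f0 a"
  using apartment_eq g0_closed halves_disjoint by auto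

lemma apartment_chamber2: "x \<in> \<Sigma> \<Longrightarrow> x \<in> C2 \<Longrightarrow> \<exists>a\<in>carrier G. x = g0 a"
  using apartment_eq f0_closed halves_disjoint by auto

lemma apartment_subset: "\<Sigma> \<subseteq> C1 \<union> C2"
  using apartment_eq f0_closed g0_closed by auto

abbreviation N where "N \<equiv> set_stab Gr act \<Sigma>"
abbreviation B1 where "B1 \<equiv> chamber_stab Gr act c1"

lemma N_carrier: "m \<in> N \<Longrightarrow> m \<in> carrier Gr"
  and N_image: "m \<in> N \<Longrightarrow> act m ` \<Sigma> = \<Sigma>"
  unfolding set_stab_def by auto

lemma N_translation:
  assumes m: "m \<in> N"
  shows "\<delta>s c1 (act m c2) \<in> carrier G" "act m c1 = f0 (\<delta>s c1 (act m c2))" "act m c2 = g0 (\<delta>s c1 (act m c2))"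
proof -
  have mc: "m \<in> carrier Gr" using N_carrier m by blast
  have "act m c1 \<in> \<Sigma>" "act m c2 \<in> \<Sigma>" using N_image[OF m] c1_in_apartment c2_in_apartment by auto
  then obtain a b where a: "a \<in> carrier G" "act m c1 = f0 a" and b: "b \<in> carrier G" "act m c2 = g0 b"
    using apartment_chamber1 apartment_chamber2 act_closed1[OF mc c1] act_closed2[OF mc c2] by metis
  have "inv a \<otimes> b = \<one>" using act_codist[OF mc c1 c2] opposite f0_g0_codist a b by simp
  then have "b = a" using a b inv_solve_left'[of "\<one>" a b] by simp
  moreover have "\<delta>s c1 (act m c2) = b" using f0_g0_codist[of \<one> b] f0_one b by simp
  ultimately show "\<delta>s c1 (act m c2) \<in> carrier G" "act m c1 = f0 (\<delta>s c1 (act m c2))"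
    "act m c2 = g0 (\<delta>s c1 (act m c2))" using a b by auto
qed

lemma N_dist: "m \<in> N \<Longrightarrow> \<delta>1 c1 (act m c1) = \<delta>s c1 (act m c2)"
  using N_translation f0_dist[of \<one> "\<delta>s c1 (act m c2)"] f0_one by simp

lemma N_codist_swap: "m \<in> N \<Longrightarrow> \<delta>s c2 (act m c1) = \<delta>s c1 (act m c2)"
  using N_translation g0_f0_codist[of \<one> "\<delta>s c1 (act m c2)"] g0_one by simp

lemma N_exists:
  assumes v: "v \<in> carrier G"
  shows "\<exists>m\<in>N. act m c1 = f0 v"
proof -
  have "f0 v \<in> \<Sigma>" using apartment_eq v by blast
  then obtain m where m: "m \<in> carrier Gr" "act m ` \<Sigma> = \<Sigma>" "act m c1 = f0 v"
    using apartment_transitive[OF twin_apartment_base twin_apartment_base c1_in_apartment] c1 f0_closed[OF v]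
    by blast
  then show ?thesis unfolding set_stab_def by blast
qed

lemma B1_N_of_common_apartment:
  assumes A: "twin_apartment G C1 \<delta>1 C2 \<delta>2 \<delta>s A" "c1 \<in> A" and x: "x \<in> A" "x \<in> C1"
  shows "\<exists>h\<in>B1. \<exists>m\<in>N. x = act h (act m c1)"
proof -
  obtain h where h: "h \<in> carrier Gr" "act h ` \<Sigma> = A" "act h c1 = c1"
    using apartment_transitive[OF twin_apartment_base A(1) c1_in_apartment A(2)] c1 by blast
  then obtain p where p: "p \<in> \<Sigma>" "x = act h p" using x by blast
  have "p \<in> C1"
  proof (rule ccontr)
    assume "p \<notin> C1"
    then have "x \<in> C2" using apartment_subset act_closed2[OF h(1)] p by blast
    then show False using x halves_disjoint by blast
  qed
  then obtain t where "t \<in> carrier G" "p = f0 t" using apartment_chamber1 p by blast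
  then obtain m where "m \<in> N" "p = act m c1" using N_exists by metis
  moreover have "h \<in> B1" using h unfolding chamber_stab_def by simp
  ultimately show ?thesis using p by blast
qed

lemma B1_dist: "h \<in> B1 \<Longrightarrow> x \<in> C1 \<Longrightarrow> \<delta>1 c1 (act h x) = \<delta>1 c1 x"
  using act_dist1[of h c1 x] c1 unfolding chamber_stab_def by simp

lemma common_twin_apartment:
  "x \<in> C1 \<Longrightarrow> \<exists>A. twin_apartment G C1 \<delta>1 C2 \<delta>2 \<delta>s A \<and> c1 \<in> A \<and> x \<in> A"
proof (induction "len (\<delta>1 c1 x)" arbitrary: x rule: less_induct)
  case less
  define v where "v = \<delta>1 c1 x"
  have v: "v \<in> carrier G" using B1.dist_closed c1 less.prems v_def by simp
  show ?case
  proof (cases "v = \<one>")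
    case True
    then show ?thesis using B1.dist_eq_one_iff c1 less.prems twin_apartment_base c1_in_apartment v_def by auto
  next
    case False
    obtain s where s: "s \<in> S" "len (v \<otimes> s) + 1 = len v"
      using right_descent_exists[OF v False] by blast
    obtain y where y: "y \<in> C1" "\<delta>1 y x = s" "\<delta>1 y c1 = s \<otimes> \<delta>1 x c1"
      using B1.adjacent_chamber_exists[OF less.prems c1 s(1)] by blast
    have "\<delta>1 y c1 = inv (v \<otimes> s)" using y(3) B1.dist_swap[OF c1 less.prems] inv_mult_gen v s v_def by simp
    then have vs: "\<delta>1 c1 y = v \<otimes> s" using B1.dist_swap[OF y(1) c1] v s gen_closed by auto
    obtain h m where h: "h \<in> B1" and m: "m \<in> N" and hm: "y = act h (act m c1)"
      using less.hyps[of y] vs s v_def y(1) B1_N_of_common_apartment by force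
    have hc: "h \<in> carrier Gr" "act h c1 = c1" using h unfolding chamber_stab_def by auto
    have mc1: "act m c1 \<in> C1" using act_closed1 N_carrier[OF m] c1 by blast
    have "\<delta>s c1 (act m c2) = v \<otimes> s"
      using vs hm B1_dist[OF h mc1] N_dist[OF m] by simp
    then have mpos: "act m c1 = f0 (v \<otimes> s)" using N_translation[OF m] by simp
    define z where "z = act h (g0 v)"
    have z: "z \<in> C2" using act_closed2[OF hc(1) g0_closed[OF v]] z_def by simp
    have "\<delta>s y z = inv (v \<otimes> s) \<otimes> v"
      using hm z_def act_codist[OF hc(1) mc1 g0_closed[OF v]] mpos f0_g0_codist v s gen_closed by auto
    also have "\<dots> = s" using inv_mult_gen v s by (simp add: m_assoc gen_closed)
    finally have "\<delta>s x z = \<one>"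
      using opposite_of_adjacent[OF less.prems y(1) z s(1) B1.dist_gen_sym[OF less.prems y(1) s(1) y(2)]]
      by blast
    then interpret xz: opposite_chambers G S C1 \<delta>1 C2 \<delta>2 \<delta>s x z
      using less.prems z by unfold_locales
    have "\<delta>s c1 z = v"
      using z_def act_codist[OF hc(1) c1 g0_closed[OF v]] hc(2) f0_g0_codist[of \<one> v] f0_one v by simp
    then have "\<delta>s z c1 = inv v" using codist_swap[OF c1 z] by simp
    moreover have "\<delta>1 x c1 = inv v" using B1.dist_swap[OF c1 less.prems] v_def by simp
    ultimately show ?thesis using xz.twin_apartment_containing[OF c1] v by blast
  qed
qed

lemma chamber_in_B1_N_orbit: "x \<in> C1 \<Longrightarrow> \<exists>h\<in>B1. \<exists>m\<in>N. x = act h (act m c1)"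
  using common_twin_apartment B1_N_of_common_apartment by metis

lemma B1_carrier: "h \<in> B1 \<Longrightarrow> h \<in> carrier Gr" and B1_fix: "h \<in> B1 \<Longrightarrow> act h c1 = c1"
  unfolding chamber_stab_def by auto

lemma double_coset_union_B1_eq:
  "double_coset_union Gr act \<delta>s c1 c2 B1 N Y = {g \<in> carrier Gr. \<delta>1 c1 (act g c1) \<in> Y}"
proof (intro equalityI subsetI)
  fix g assume "g \<in> double_coset_union Gr act \<delta>s c1 c2 B1 N Y"
  then obtain m b b' where m: "m \<in> N" "\<delta>s c1 (act m c2) \<in> Y" and b: "b \<in> B1" "b' \<in> B1"
    and g: "g = b \<otimes>\<^bsub>Gr\<^esub> (m \<otimes>\<^bsub>Gr\<^esub> b')"
    unfolding double_coset_union_def set_mult_def l_coset_def by blast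
  have mc: "m \<in> carrier Gr" and mc1: "act m c1 \<in> C1" using N_carrier[OF m(1)] act_closed1 c1 by auto
  have gc: "g \<in> carrier Gr" using g mc B1_carrier b by simp
  have "act g c1 = act b (act m (act b' c1))"
    using g act_mult B1_carrier[OF b(1)] B1_carrier[OF b(2)] mc c1 act_closed1 by simp
  then have "\<delta>1 c1 (act g c1) = \<delta>s c1 (act m c2)"
    using B1_fix[OF b(2)] B1_dist[OF b(1) mc1] N_dist[OF m(1)] by simp
  then show "g \<in> {g \<in> carrier Gr. \<delta>1 c1 (act g c1) \<in> Y}" using gc m(2) by simp
next
  fix g assume g: "g \<in> {g \<in> carrier Gr. \<delta>1 c1 (act g c1) \<in> Y}"
  then have gc: "g \<in> carrier Gr" by simp
  obtain h m where h: "h \<in> B1" and m: "m \<in> N" and hm: "act g c1 = act h (act m c1)"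
    using chamber_in_B1_N_orbit act_closed1[OF gc c1] by blast
  have hmc: "h \<otimes>\<^bsub>Gr\<^esub> m \<in> carrier Gr" and mc1: "act m c1 \<in> C1"
    using B1_carrier[OF h] N_carrier[OF m] act_closed1 c1 by auto
  define b' where "b' = inv\<^bsub>Gr\<^esub> (h \<otimes>\<^bsub>Gr\<^esub> m) \<otimes>\<^bsub>Gr\<^esub> g"
  have "act b' c1 = act (inv\<^bsub>Gr\<^esub> (h \<otimes>\<^bsub>Gr\<^esub> m)) (act (h \<otimes>\<^bsub>Gr\<^esub> m) c1)"
    using b'_def act_mult hmc gc c1 hm B1_carrier[OF h] N_carrier[OF m] by simp
  then have "b' \<in> B1"
    using building_action.act_inv_act[OF building_action1 hmc c1] b'_def hmc gc
    unfolding chamber_stab_def by simp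
  moreover have "g = h \<otimes>\<^bsub>Gr\<^esub> (m \<otimes>\<^bsub>Gr\<^esub> b')"
    using b'_def hmc gc B1_carrier[OF h] N_carrier[OF m] by (simp add: Gr.m_assoc[symmetric])
  moreover have "\<delta>s c1 (act m c2) \<in> Y"
    using g hm B1_dist[OF h mc1] N_dist[OF m] by simp
  ultimately show "g \<in> double_coset_union Gr act \<delta>s c1 c2 B1 N Y"
    unfolding double_coset_union_def set_mult_def l_coset_def using h m by blast
qed

lemma twin_bn_pair_swap: "twin_bn_pair G S C2 \<delta>2 C1 \<delta>1 \<delta>s c2 c1 Gr act \<Sigma> g0 f0"
  unfolding twin_bn_pair_def twin_bn_pair_axioms_def
  using opposite_chambers_swap strongly_transitive_action_swap[OF strongly_transitive]
    twin_apartment_param_swap[OF apartment_param] f0_one g0_one by blast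

lemma double_coset_union_swap:
  "double_coset_union Gr act \<delta>s c1 c2 B N Y = double_coset_union Gr act \<delta>s c2 c1 B N Y"
proof -
  have "{m. m \<in> N \<and> \<delta>s c1 (act m c2) \<in> Y} = {m. m \<in> N \<and> \<delta>s c2 (act m c1) \<in> Y}"
    using N_codist_swap by auto
  then show ?thesis unfolding double_coset_union_def by simp
qed

lemma double_coset_union_B2_eq:
  "double_coset_union Gr act \<delta>s c1 c2 (chamber_stab Gr act c2) N Y = {g \<in> carrier Gr. \<delta>2 c2 (act g c2) \<in> Y}"
  using twin_bn_pair.double_coset_union_B1_eq[OF twin_bn_pair_swap] double_coset_union_swap by simp

lemma chamber_pair_fibre_subset:
  assumes a: "a \<in> carrier Gr"
  shows "{g \<in> carrier Gr. act g c1 = act a c1 \<and> act g c2 = act a c2} \<subseteq>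
    (\<lambda>t. a \<otimes>\<^bsub>Gr\<^esub> t) ` (B1 \<inter> chamber_stab Gr act c2)"
proof
  fix g assume g: "g \<in> {g \<in> carrier Gr. act g c1 = act a c1 \<and> act g c2 = act a c2}"
  define t where "t = inv\<^bsub>Gr\<^esub> a \<otimes>\<^bsub>Gr\<^esub> g"
  have t: "t \<in> carrier Gr" "g = a \<otimes>\<^bsub>Gr\<^esub> t" using t_def a g by (auto simp: Gr.m_assoc[symmetric])
  have "act t c = c" if c: "c \<in> C1 \<union> C2" "act g c = act a c" for c
  proof -
    have "act t c = act (inv\<^bsub>Gr\<^esub> a) (act a c)" using act_mult[of "inv\<^bsub>Gr\<^esub> a" g c] c t_def a g by simp
    also have "\<dots> = act (inv\<^bsub>Gr\<^esub> a \<otimes>\<^bsub>Gr\<^esub> a) c" using act_mult[of "inv\<^bsub>Gr\<^esub> a" a c] c a by simp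
    finally show ?thesis using act_one c a by simp
  qed
  then have "t \<in> B1 \<inter> chamber_stab Gr act c2" using g t(1) c1 c2 unfolding chamber_stab_def by simp
  then show "g \<in> (\<lambda>t. a \<otimes>\<^bsub>Gr\<^esub> t) ` (B1 \<inter> chamber_stab Gr act c2)" using t(2) by blast
qed

lemma finite_chamber_pair_transporter:
  assumes T: "finite (B1 \<inter> chamber_stab Gr act c2)" and F: "finite F1" "finite F2"
  shows "finite {g \<in> carrier Gr. act g c1 \<in> F1 \<and> act g c2 \<in> F2}"
proof -
  define fibre where "fibre p = {g \<in> carrier Gr. act g c1 = fst p \<and> act g c2 = snd p}" for p
  have "finite (fibre p)" for p
  proof (cases "fibre p = {}")
    case False
    then obtain a where a: "a \<in> fibre p" by blast
    then have "fibre p = {g \<in> carrier Gr. act g c1 = act a c1 \<and> act g c2 = act a c2}"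
      unfolding fibre_def by auto
    then show ?thesis using chamber_pair_fibre_subset[of a] a T unfolding fibre_def
      by (metis (no_types, lifting) finite_imageI finite_subset mem_Collect_eq)
  qed simp
  then have "finite (\<Union>p\<in>F1 \<times> F2. fibre p)" using F by blast
  moreover have "{g \<in> carrier Gr. act g c1 \<in> F1 \<and> act g c2 \<in> F2} \<subseteq> (\<Union>p\<in>F1 \<times> F2. fibre p)"
    unfolding fibre_def by auto
  ultimately show ?thesis by (rule finite_subset[rotated])
qed

lemma finite_parabolic_intersection:
  assumes T: "finite (B1 \<inter> chamber_stab Gr act c2)"
    and panels1: "\<And>s x. s \<in> S \<Longrightarrow> x \<in> C1 \<Longrightarrow> finite (panel G C1 \<delta>1 s x)"
    and panels2: "\<And>s x. s \<in> S \<Longrightarrow> x \<in> C2 \<Longrightarrow> finite (panel G C2 \<delta>2 s x)"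
    and I: "I \<subseteq> S" "finite (generate G I)" and J: "J \<subseteq> S" "finite (generate G J)"
    and n: "n \<in> carrier Gr"
  shows "finite ({g \<in> carrier Gr. \<delta>1 c1 (act g c1) \<in> generate G I} \<inter>
    {g \<in> carrier Gr. \<delta>2 (act n c2) (act g (act n c2)) \<in> generate G J})"
proof -
  have nc2: "act n c2 \<in> C2" using act_closed2[OF n c2] .
  define e where "e = \<delta>2 (act n c2) c2"
  define F1 where "F1 = {y \<in> C1. \<delta>1 c1 y \<in> generate G I}"
  define F2 where "F2 = {y \<in> C2. \<delta>2 (act n c2) y \<in> generate G J}"
  define F3 where "F3 = (\<Union>y\<in>F2. {z \<in> C2. \<delta>2 y z = e})"
  have gen: "generate G I \<subseteq> carrier G" "generate G J \<subseteq> carrier G"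
    using generate_incl I J gens_subset by blast+
  have F1: "finite F1" unfolding F1_def by (rule B1.finite_ball[OF panels1 I(2) gen(1) c1])
  have F2: "finite F2" unfolding F2_def by (rule B2.finite_ball[OF panels2 J(2) gen(2) nc2])
  have "finite {z \<in> C2. \<delta>2 y z = e}" if "y \<in> F2" for y
    using B2.finite_sphere[OF panels2 B2.dist_closed[OF nc2 c2]] that unfolding e_def F2_def by blast
  then have "finite F3" unfolding F3_def using F2 by (rule finite_UN_I[rotated])
  moreover have "{g \<in> carrier Gr. \<delta>1 c1 (act g c1) \<in> generate G I} \<inter>
      {g \<in> carrier Gr. \<delta>2 (act n c2) (act g (act n c2)) \<in> generate G J}
      \<subseteq> {g \<in> carrier Gr. act g c1 \<in> F1 \<and> act g c2 \<in> F3}"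
  proof (intro subsetI CollectI conjI)
    fix g assume g: "g \<in> {g \<in> carrier Gr. \<delta>1 c1 (act g c1) \<in> generate G I} \<inter>
      {g \<in> carrier Gr. \<delta>2 (act n c2) (act g (act n c2)) \<in> generate G J}"
    then have gc: "g \<in> carrier Gr" by blast
    show "g \<in> carrier Gr" by (rule gc)
    show "act g c1 \<in> F1" using g act_closed1[OF gc c1] unfolding F1_def by blast
    have "act g (act n c2) \<in> F2" using g act_closed2[OF gc nc2] unfolding F2_def by blast
    moreover have "\<delta>2 (act g (act n c2)) (act g c2) = e" using act_dist2[OF gc nc2 c2] e_def by simp
    ultimately show "act g c2 \<in> F3" using act_closed2[OF gc c2] unfolding F3_def by blast
  qed
  ultimately show ?thesis using finite_subset finite_chamber_pair_transporter[OF T F1] by blast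
qed

end

lemma finite_panels_of_panel_sizes:
  assumes "panel_sizes W S Cp \<delta>p Cm \<delta>m q" "s \<in> S"
  shows "x \<in> Cp \<Longrightarrow> finite (panel W Cp \<delta>p s x)" and "x \<in> Cm \<Longrightarrow> finite (panel W Cm \<delta>m s x)"
proof -
  have "x \<in> Cp \<Longrightarrow> card (panel W Cp \<delta>p s x) = q s + 1" "x \<in> Cm \<Longrightarrow> card (panel W Cm \<delta>m s x) = q s + 1"
    using assms unfolding panel_sizes_def by blast+
  then show "x \<in> Cp \<Longrightarrow> finite (panel W Cp \<delta>p s x)" "x \<in> Cm \<Longrightarrow> finite (panel W Cm \<delta>m s x)"
    using card.infinite by force+
qed

theorem mainTheorem6:
  fixes W :: "('w, 'a) monoid_scheme" and S :: "'w set"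
    and Cp Cm :: "'c set" and \<delta>p \<delta>m \<delta>s :: "'c \<Rightarrow> 'c \<Rightarrow> 'w" and q :: "'w \<Rightarrow> nat"
    and G :: "('g, 'b) monoid_scheme" and act :: "'g \<Rightarrow> 'c \<Rightarrow> 'c"
    and cp cm :: 'c and \<Sigma> :: "'c set"
    and I J :: "'w set" and w :: 'w and n :: 'g
  assumes tb: "twin_building W S Cp \<delta>p Cm \<delta>m \<delta>s"
    and thick: "panel_sizes W S Cp \<delta>p Cm \<delta>m q"
    and st: "strongly_transitive_action G act W Cp \<delta>p Cm \<delta>m \<delta>s"
    and cp: "cp \<in> Cp" and cm: "cm \<in> Cm" and opp: "\<delta>s cp cm = \<one>\<^bsub>W\<^esub>"
    and app: "twin_apartment W Cp \<delta>p Cm \<delta>m \<delta>s \<Sigma>" and "cp \<in> \<Sigma>" and "cm \<in> \<Sigma>"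
    and Tfin: "finite (chamber_stab G act cp \<inter> chamber_stab G act cm)"
    and IJ: "I \<subseteq> S" "J \<subseteq> S"
    and sph: "finite (generate W I)" "finite (generate W J)"
    and w: "w \<in> carrier W"
    and n: "n \<in> set_stab G act \<Sigma>" "\<delta>s cp (act n cm) = w"
  shows "finite (rcosets\<^bsub>G\<lparr>carrier :=
             double_coset_union G act \<delta>s cp cm (chamber_stab G act cp) (set_stab G act \<Sigma>) (generate W I)
             \<inter> conjset G n (double_coset_union G act \<delta>s cp cm (chamber_stab G act cm) (set_stab G act \<Sigma>) (generate W J))\<rparr>\<^esub>
           (chamber_stab G act cp \<inter> conjset G n (chamber_stab G act cm)))
       \<and> subgroup (double_coset_union G act \<delta>s cp cm (chamber_stab G act cp) (set_stab G act \<Sigma>) (generate W I)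
             \<inter> conjset G n (double_coset_union G act \<delta>s cp cm (chamber_stab G act cm) (set_stab G act \<Sigma>) (generate W J))) G
       \<and> finite (double_coset_union G act \<delta>s cp cm (chamber_stab G act cp) (set_stab G act \<Sigma>) (generate W I)
             \<inter> conjset G n (double_coset_union G act \<delta>s cp cm (chamber_stab G act cm) (set_stab G act \<Sigma>) (generate W J)))"
proof -
  interpret twin_buildings W S Cp \<delta>p Cm \<delta>m \<delta>s using tb by (rule twin_buildings_of_twin_building)
  have "opposite_chambers_axioms W Cp Cm \<delta>s cp cm" using cp cm opp by (rule opposite_chambers_axioms.intro)
  then interpret opposite_chambers W S Cp \<delta>p Cm \<delta>m \<delta>s cp cm
    by (rule opposite_chambers.intro[OF twin_buildings_axioms])
  obtain f g where "twin_apartment_param W Cp \<delta>p Cm \<delta>m \<delta>s f g \<Sigma>" "f \<one>\<^bsub>W\<^esub> = cp" "g \<one>\<^bsub>W\<^esub> = cm"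
    using normalized_param_exists[OF app \<open>cp \<in> \<Sigma>\<close> \<open>cm \<in> \<Sigma>\<close>] by blast
  then interpret twin_bn_pair W S Cp \<delta>p Cm \<delta>m \<delta>s cp cm G act \<Sigma> f g
    by (intro twin_bn_pair.intro[OF opposite_chambers_axioms] twin_bn_pair_axioms.intro st)
  interpret G: group G by (rule group_Gr)
  \<comment> \<open>The hypotheses on \<open>w\<close> only name the image of \<open>n\<close> in \<open>W\<close>.\<close>
  have nc: "n \<in> carrier G" using N_carrier n(1) by blast
  define H where "H = {g \<in> carrier G. \<delta>p cp (act g cp) \<in> generate W I} \<inter>
    {g \<in> carrier G. \<delta>m (act n cm) (act g (act n cm)) \<in> generate W J}"
  have H_eq: "double_coset_union G act \<delta>s cp cm (chamber_stab G act cp) (set_stab G act \<Sigma>) (generate W I)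
      \<inter> conjset G n (double_coset_union G act \<delta>s cp cm (chamber_stab G act cm) (set_stab G act \<Sigma>) (generate W J)) = H"
    unfolding H_def double_coset_union_B1_eq double_coset_union_B2_eq
      building_action.conjset_residue_stabilizer[OF building_action2 nc cm] ..
  have "finite H"
    unfolding H_def using finite_parabolic_intersection[OF Tfin _ _ IJ(1) sph(1) IJ(2) sph(2) nc]
      finite_panels_of_panel_sizes[OF thick] by blast
  moreover have "subgroup H G"
    unfolding H_def
    by (rule G.subgroups_Inter_pair[OF building_action.residue_stabilizer_subgroup[OF building_action1 IJ(1) cp]
          building_action.residue_stabilizer_subgroup[OF building_action2 IJ(2) act_closed2[OF nc cm]]])
  ultimately show ?thesis unfolding H_eq RCOSETS_def by simp
qed

end
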